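(* Let $T(x)=1+\sum_{n\ge1}t_nx^n$ be the cluster generating function for the consecutive pattern $13425$ (defined in the context). Then \[T(x) = \frac{1+2x-F(x)}{1+x-F(x)},\qquad F(x) = \frac{2}{\sqrt{3x}}\sinh\!\left(\frac13 \operatorname{arcsinh}\!\left(\frac{3\sqrt{3x^3}}{2}\right)\right),\] where $F(x)=x+O(x^4)$ is a power series in $x$. Moreover $T(x)$ is an algebraic function, being a root of a cubic polynomial with coefficients in $\mathbb{Z}[x]$.
   Context: For a consecutive pattern $\sigma$ of length $m$ (here $\sigma=13425$, $m=5$): an occurrence of $\sigma$ in a permutation is a block of $m$ consecutive positions whose entries are in the same relative order as $\sigma$. A $k$-cluster of length $n\ge m$ is a permutation of $\{1,\dots,n\}$ containing precisely $k$ occurrences of $\sigma$, such that every entry belongs to at least one occurrence and any two successive occurrences overlap in at least one position. Let $s_{n,k}$ be the number of $k$-clusters of length $n$, with $s_{1,0}=1$ and $s_{n,k}=0$ otherwise for $n<m$; set $t_n=\sum_k(-1)^ks_{n,k}$ and $T(x)=1+\sum_{n\ge1}t_nx^n$. *)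

theory Defs
  imports "HOL-Analysis.Analysis" "HOL-Analysis.FPS_Convergence"
    "HOL-Computational_Algebra.Polynomial_FPS"
    "HOL-Combinatorics.Multiset_Permutations"
begin

definition sigma :: "nat list" where "sigma = [1,3,4,2,5]"

definition pat_len :: nat where "pat_len = length sigma"

definition occ_at :: "nat list \<Rightarrow> nat \<Rightarrow> bool" where
  "occ_at w i \<longleftrightarrow> i + pat_len \<le> length w \<and>
     (\<forall>a<pat_len. \<forall>b<pat_len. (w ! (i + a) < w ! (i + b) \<longleftrightarrow> sigma ! a < sigma ! b))"

definition occs :: "nat list \<Rightarrow> nat set" where
  "occs w = {i. occ_at w i}"

definition is_cluster :: "nat \<Rightarrow> nat list \<Rightarrow> bool" where
  "is_cluster k w \<longleftrightarrow>
     card (occs w) = k \<and>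
     (\<forall>p<length w. \<exists>i\<in>occs w. i \<le> p \<and> p < i + pat_len) \<and>
     (\<forall>i\<in>occs w. \<forall>j\<in>occs w. i < j \<and> (\<forall>l\<in>occs w. \<not> (i < l \<and> l < j))
         \<longrightarrow> j < i + pat_len)"

definition s_num :: "nat \<Rightarrow> nat \<Rightarrow> nat" where
  "s_num n k = (if n < pat_len then (if n = 1 \<and> k = 0 then 1 else 0)
     else card {w \<in> permutations_of_set {1..n}. is_cluster k w})"

text \<open>t_n = sum_k (-1)^k s_{n,k}; a k-cluster of length n has k \<le> n, so the sum is finite.\<close>
definition t_num :: "nat \<Rightarrow> int" where
  "t_num n = (\<Sum>k\<le>n. (-1) ^ k * int (s_num n k))"

definition cluster_T :: "real fps" where
  "cluster_T = Abs_fps (\<lambda>n. if n = 0 then 1 else real_of_int (t_num n))"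

end

theory Submission
  imports Defs
begin

text \<open>A cluster of \<open>13425\<close> starts with a maximal run of occurrences at \<open>0, 3, \<dots>, 3 (j - 1)\<close>;
  after it the cluster either ends (at length \<open>3 j + 2\<close>) or continues with an occurrence at
  \<open>3 j + 1\<close>, and the entry at \<open>3 j + 1\<close> exceeds everything before it and is exceeded by
  everything after it. Cutting there gives \<open>s(n, k) = \<Sum>\<^sub>j r\<^sub>j s(n - 3 j - 1, k - j)\<close>, where
  \<open>r\<^sub>j\<close> counts the linear extensions of a zigzag poset on \<open>3 j + 2\<close> points. Removing minimal
  elements one by one shows that \<open>r\<^sub>j\<close> is the number of walks with steps \<open>+2\<close>, \<open>-1\<close> from
  height \<open>1\<close> to \<open>0\<close> of length \<open>n = 3 j + 1\<close>, which up to sign is the coefficient of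
  \<open>x\<^sup>n\<close> in the root \<open>F\<close> of \<open>F = x (1 - F\<^sup>3)\<close>. Summing with signs
  \<open>(-1)\<^sup>k\<close> turns the recursion into \<open>T - 1 = x + (F - x) (T - 1)\<close>. The \<open>sinh\<close> formula is
  Cardano's solution of \<open>F + x F\<^sup>3 = x\<close>, and eliminating \<open>F\<close> yields a cubic equation for \<open>T\<close>.\<close>

section \<open>Walks with steps \<open>+2\<close> and \<open>-1\<close> and the series \<open>F\<close>\<close>

text \<open>\<open>walk_count k n\<close> counts the walks with steps \<open>+2\<close> and \<open>-1\<close> that start at height \<open>k\<close>
  and first reach height \<open>0\<close> after \<open>n\<close> steps. Up to sign these are the coefficients of
  the powers of the solution \<open>F\<close> of \<open>F = x (1 - F\<^sup>3)\<close>, a walk from height \<open>k\<close> being a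
  concatenation of \<open>k\<close> walks that descend by one.\<close>

fun walk_count :: "nat \<Rightarrow> nat \<Rightarrow> nat" where
  "walk_count 0 0 = 1"
| "walk_count 0 (Suc n) = 0"
| "walk_count (Suc k) 0 = 0"
| "walk_count (Suc k) (Suc n) = walk_count (k + 3) n + walk_count k n"

lemma walk_count_0_left: "walk_count 0 n = (if n = 0 then 1 else 0)"
  by (cases n) auto

lemma walk_count_add:
  "walk_count (a + b) n = (\<Sum>i\<le>n. walk_count a i * walk_count b (n - i))"
proof (induction n arbitrary: a b)
  case 0
  then show ?case by (cases a) auto
next
  case (Suc n)
  show ?case
  proof (cases a)
    case 0
    have "(\<Sum>i\<le>Suc n. walk_count a i * walk_count b (Suc n - i))
        = (\<Sum>i\<le>Suc n. if i = 0 then walk_count b (Suc n) else 0)"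
      by (rule sum.cong) (auto simp: walk_count_0_left 0)
    then show ?thesis using 0 by simp
  next
    case (Suc a')
    have "walk_count (a + b) (Suc n) = walk_count (a' + 3 + b) n + walk_count (a' + b) n"
      using Suc by (simp add: ac_simps)
    also have "\<dots> = (\<Sum>i\<le>n. walk_count (a' + 3) i * walk_count b (n - i))
        + (\<Sum>i\<le>n. walk_count a' i * walk_count b (n - i))"
      using Suc.IH by presburger
    also have "\<dots> = (\<Sum>i\<le>n. walk_count a (Suc i) * walk_count b (Suc n - Suc i))"
      by (simp add: Suc sum.distrib[symmetric] algebra_simps)
    also have "\<dots> = (\<Sum>i\<le>Suc n. walk_count a i * walk_count b (Suc n - i))"
      by (subst sum.atMost_Suc_shift) (simp add: Suc del: sum.atMost_Suc)
    finally show ?thesis .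
  qed
qed

lemma walk_count_nonzero_imp_mod: "walk_count k n \<noteq> 0 \<Longrightarrow> n mod 3 = k mod 3"
proof (induction k n rule: walk_count.induct)
  case (4 k n)
  then have "n mod 3 = k mod 3"
    by (metis walk_count.simps(4) add.commute add_cancel_right_left mod_add_self2 numeral_3_eq_3)
  then show ?case by (metis mod_Suc_eq)
qed auto

lemma walk_count_nonzero_imp_le: "walk_count k n \<noteq> 0 \<Longrightarrow> k \<le> n"
  by (induction k n rule: walk_count.induct) auto

lemma walk_count_le_power: "walk_count k n \<le> 2 ^ n"
  by (induction k n rule: walk_count.induct) auto

definition walk_fps :: "nat \<Rightarrow> real fps" where
  "walk_fps k = Abs_fps (\<lambda>n. (-1) ^ (n + k) * real (walk_count k n))"

definition F_fps :: "real fps" where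
  "F_fps = walk_fps 1"

lemma walk_fps_0: "walk_fps 0 = 1"
  by (rule fps_ext) (simp add: walk_fps_def walk_count_0_left)

lemma walk_fps_add: "walk_fps (a + b) = walk_fps a * walk_fps b"
proof (rule fps_ext)
  fix n
  have "fps_nth (walk_fps a * walk_fps b) n = (\<Sum>i=0..n.
      (-1) ^ (i + a) * real (walk_count a i) * ((-1) ^ (n - i + b) * real (walk_count b (n - i))))"
    by (simp add: fps_mult_nth walk_fps_def)
  also have "\<dots> = (\<Sum>i=0..n. (-1) ^ (n + (a + b)) * (real (walk_count a i) * real (walk_count b (n - i))))"
  proof (rule sum.cong)
    fix i
    assume "i \<in> {0..n}"
    then have "(i + a) + (n - i + b) = n + (a + b)"
      by simp
    then have "(-1::real) ^ (i + a) * (-1) ^ (n - i + b) = (-1) ^ (n + (a + b))"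
      by (metis power_add)
    then show "(-1) ^ (i + a) * real (walk_count a i) * ((-1) ^ (n - i + b) * real (walk_count b (n - i)))
        = (-1) ^ (n + (a + b)) * (real (walk_count a i) * real (walk_count b (n - i)))"
      by (simp add: algebra_simps)
  qed simp
  also have "\<dots> = fps_nth (walk_fps (a + b)) n"
    by (simp add: walk_fps_def walk_count_add sum_distrib_left atMost_atLeast0)
  finally show "fps_nth (walk_fps (a + b)) n = fps_nth (walk_fps a * walk_fps b) n"
    by simp
qed

lemma walk_fps_eq_power: "walk_fps k = F_fps ^ k"
proof (induction k)
  case 0
  then show ?case by (simp add: walk_fps_0)
next
  case (Suc k)
  have "walk_fps (Suc k) = walk_fps 1 * walk_fps k"
    using walk_fps_add[of 1 k] by simp
  then show ?case using Suc by (simp add: F_fps_def)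
qed

lemma walk_fps_Suc: "walk_fps (Suc k) = fps_X * (walk_fps k - walk_fps (k + 3))"
proof (rule fps_ext)
  fix n
  show "fps_nth (walk_fps (Suc k)) n = fps_nth (fps_X * (walk_fps k - walk_fps (k + 3))) n"
    by (cases n) (simp_all add: walk_fps_def algebra_simps power_add)
qed

lemma F_fps_cubic: "F_fps + fps_X * F_fps ^ 3 = fps_X"
proof -
  have "F_fps = fps_X * (1 - F_fps ^ 3)"
    using walk_fps_Suc[of 0] walk_fps_eq_power[of 3] by (simp add: F_fps_def walk_fps_0)
  then show ?thesis by (simp add: algebra_simps)
qed

lemma fps_nth_F_fps: "fps_nth F_fps n = (-1) ^ (n + 1) * real (walk_count 1 n)"
  by (simp add: F_fps_def walk_fps_def)

lemma F_fps_initial_coeffs: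
  "fps_nth F_fps 0 = 0" "fps_nth F_fps 1 = 1" "fps_nth F_fps 2 = 0" "fps_nth F_fps 3 = 0"
  by (simp_all add: fps_nth_F_fps numeral_eq_Suc)

lemma F_fps_conv_radius: "ereal (1/4) \<le> fps_conv_radius F_fps"
proof -
  have "norm (fps_nth F_fps n * (1/4) ^ n) \<le> (1/2::real) ^ n" for n
  proof -
    have "real (walk_count 1 n) \<le> 2 ^ n"
      by (metis walk_count_le_power of_nat_le_iff of_nat_numeral of_nat_power)
    then have "real (walk_count 1 n) * (1/4) ^ n \<le> 2 ^ n * (1/4::real) ^ n"
      by (simp add: mult_right_mono)
    also have "\<dots> = (1/2) ^ n"
      by (simp flip: power_mult_distrib)
    finally show ?thesis
      by (simp add: fps_nth_F_fps abs_mult power_abs)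
  qed
  then have "summable (\<lambda>n. fps_nth F_fps n * (1/4::real) ^ n)"
    by (intro summable_comparison_test[OF _ summable_geometric[of "1/2::real"]]) auto
  from conv_radius_geI[OF this] show ?thesis
    by (simp add: fps_conv_radius_def)
qed

lemma sinh_triple: "sinh (3 * u) = 3 * sinh u + 4 * sinh u ^ 3" for u :: real
proof -
  have "sinh (3 * u) = sinh (u + (u + u))"
    by (simp add: algebra_simps)
  also have "\<dots> = sinh u * (cosh u * cosh u + sinh u * sinh u) + cosh u * (2 * sinh u * cosh u)"
    by (simp only: sinh_add cosh_add) (simp add: algebra_simps)
  also have "\<dots> = sinh u * ((cosh u)\<^sup>2 + (sinh u)\<^sup>2) + 2 * sinh u * (cosh u)\<^sup>2"
    by (simp add: algebra_simps power2_eq_square)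
  also have "\<dots> = 3 * sinh u + 4 * sinh u ^ 3"
    unfolding cosh_square_eq by (simp add: power2_eq_square power3_eq_cube algebra_simps)
  finally show ?thesis .
qed

text \<open>Cardano's trigonometric (here hyperbolic) solution of \<open>z + x z\<^sup>3 = x\<close>:
  with \<open>z = 2 sinh u / sqrt (3 x)\<close> the cubic becomes the triplication formula for \<open>sinh\<close>.\<close>

lemma sinh_formula_solves_cubic:
  fixes x :: real
  assumes "x > 0"
  defines "z \<equiv> 2 / sqrt (3 * x) * sinh (arsinh (3 * sqrt (3 * x ^ 3) / 2) / 3)"
  shows "z + x * z ^ 3 = x"
proof -
  define s where "s = sinh (arsinh (3 * sqrt (3 * x ^ 3) / 2) / 3)"
  define q where "q = sqrt (3 * x)"
  have q: "q > 0" "q\<^sup>2 = 3 * x"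
    using assms by (auto simp: q_def)
  have "sqrt (3 * x ^ 3) = sqrt (x\<^sup>2) * q"
    by (simp add: q_def power3_eq_cube power2_eq_square real_sqrt_mult flip: mult.assoc)
  then have sqrt_x3: "sqrt (3 * x ^ 3) = x * q"
    using assms by simp
  have "3 * s + 4 * s ^ 3 = sinh (3 * (arsinh (3 * sqrt (3 * x ^ 3) / 2) / 3))"
    using sinh_triple[of "arsinh (3 * sqrt (3 * x ^ 3) / 2) / 3"] by (simp add: s_def)
  also have "\<dots> = 3 * x * q / 2"
    by (simp add: sqrt_x3)
  finally have triple: "3 * s + 4 * s ^ 3 = 3 * x * q / 2" .
  have "(z + x * z ^ 3) * q = 2 * s + x * 8 * s ^ 3 / q\<^sup>2"
    using q by (simp add: z_def s_def q_def power3_eq_cube power2_eq_square field_simps)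
  also have "\<dots> = x * q"
    using q triple assms by (simp add: field_simps)
  finally show ?thesis
    using q by simp
qed

lemma cubic_solution_unique:
  fixes x y z :: real
  assumes "x > 0" "y + x * y ^ 3 = x" "z + x * z ^ 3 = x"
  shows "y = z"
proof -
  have "(y - z) * (1 + x * (y\<^sup>2 + y * z + z\<^sup>2)) = 0"
    using assms by (simp add: algebra_simps power2_eq_square power3_eq_cube)
  moreover have "y\<^sup>2 + y * z + z\<^sup>2 = (y + z / 2)\<^sup>2 + 3/4 * z\<^sup>2"
    by (simp add: algebra_simps power2_eq_square)
  then have "1 + x * (y\<^sup>2 + y * z + z\<^sup>2) > 0"
    using assms(1) by (simp add: add_pos_nonneg)
  ultimately show ?thesis
    by simp
qed

lemma eval_F_fps:
  fixes x :: real
  assumes "0 < x" "x < 1/4"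
  shows "eval_fps F_fps x = 2 / sqrt (3 * x) * sinh (arsinh (3 * sqrt (3 * x ^ 3) / 2) / 3)"
proof -
  have "ereal (norm x) < ereal (1/4)"
    using assms by simp
  then have r: "ereal (norm x) < fps_conv_radius F_fps"
    using F_fps_conv_radius by (rule order_less_le_trans)
  have r3: "ereal (norm x) < fps_conv_radius (F_fps ^ 3)"
    using r fps_conv_radius_power[of F_fps 3] by (meson order_less_le_trans)
  have rX3: "ereal (norm x) < fps_conv_radius (fps_X * F_fps ^ 3)"
    using fps_conv_radius_mult[of fps_X "F_fps ^ 3"] r3 by (simp add: order_less_le_trans)
  have "eval_fps (F_fps + fps_X * F_fps ^ 3) x = eval_fps F_fps x + x * eval_fps F_fps x ^ 3"
    by (simp add: eval_fps_add[OF r rX3] eval_fps_mult[OF _ r3] eval_fps_power[OF r])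
  then have "eval_fps F_fps x + x * eval_fps F_fps x ^ 3 = x"
    using F_fps_cubic by simp
  then show ?thesis
    using cubic_solution_unique sinh_formula_solves_cubic assms(1) by blast
qed

section \<open>Occurrences of \<open>13425\<close> and chains\<close>

lemma pat_len_eq: "pat_len = 5"
  by (simp add: pat_len_def sigma_def)

lemma occ_at_iff:
  "occ_at w i \<longleftrightarrow> i + 5 \<le> length w \<and> w!i < w!(i+3) \<and> w!(i+3) < w!(i+1) \<and>
     w!(i+1) < w!(i+2) \<and> w!(i+2) < w!(i+4)"
proof -
  have all5: "(\<forall>a<(5::nat). P a) \<longleftrightarrow> P 0 \<and> P 1 \<and> P 2 \<and> P 3 \<and> P 4" for P
    by (auto simp: less_Suc_eq numeral_eq_Suc)
  show ?thesis
    unfolding occ_at_def pat_len_eq all5 by (auto simp: sigma_def)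
qed

lemma occ_at_imp_length: "occ_at w i \<Longrightarrow> i + 5 \<le> length w"
  by (simp add: occ_at_iff)

lemma occs_imp_length: "i \<in> occs w \<Longrightarrow> i + 5 \<le> length w"
  by (simp add: occs_def occ_at_imp_length)

lemma occ_at_order:
  assumes "occ_at w i"
  shows "w!i < w!(i+1)" "w!i < w!(i+2)" "w!i < w!(i+3)" "w!i < w!(i+4)"
    "w!(i+1) < w!(i+4)" "w!(i+2) < w!(i+4)" "w!(i+3) < w!(i+4)"
  using assms by (auto simp: occ_at_iff)

lemma occ_at_gap:
  assumes "occ_at w i" "occ_at w j" "i < j"
  shows "i + 3 \<le> j"
proof (rule ccontr)
  assume "\<not> i + 3 \<le> j"
  then have "j = i + 1 \<or> j = i + 2"
    using assms(3) by auto
  moreover have "w!(i+3) < w!(i+1)" "w!(i+1) < w!(i+2)"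
    using assms(1) by (simp_all add: occ_at_iff)
  moreover have "w!(j+1) < w!(j+2)" "w!j < w!(j+3)" "w!(j+3) < w!(j+1)"
    using assms(2) by (simp_all add: occ_at_iff)
  moreover have "i + 1 + 1 = i + 2" "i + 1 + 2 = i + 3" "i + 2 + 1 = i + 3"
    by simp_all
  ultimately show False
    by (metis less_trans order.asym)
qed

lemma occ_at_drop: "occ_at (drop d w) i \<longleftrightarrow> occ_at w (i + d)"
  by (cases "d \<le> length w") (auto simp: occ_at_iff ac_simps)

lemma occ_at_take: "occ_at (take t w) i \<longleftrightarrow> occ_at w i \<and> i + 5 \<le> t"
  by (auto simp: occ_at_iff)

lemma occ_at_map_order_iso:
  assumes "\<And>x y. x \<in> set w \<Longrightarrow> y \<in> set w \<Longrightarrow> f x < f y \<longleftrightarrow> x < y"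
  shows "occ_at (map f w) i \<longleftrightarrow> occ_at w i"
proof -
  have "i + 5 \<le> length w \<Longrightarrow> a < 5 \<Longrightarrow> w!(i+a) \<in> set w" for a
    by simp
  then show ?thesis
    unfolding occ_at_iff using assms by auto
qed

lemma occ_at_prefix:
  assumes "length v \<le> length w" "\<forall>p<length v. w!p = v!p" "i + 5 \<le> length v"
  shows "occ_at w i \<longleftrightarrow> occ_at v i"
  using assms unfolding occ_at_iff by auto

lemma occ_at_shifted_suffix:
  assumes "length w = N + length u" "\<forall>p. N \<le> p \<longrightarrow> p < length w \<longrightarrow> w!p = u!(p-N) + N"
  shows "occ_at w (i + N) \<longleftrightarrow> occ_at u i"
proof (cases "i + 5 \<le> length u")
  case True
  have "\<And>a. a < 5 \<Longrightarrow> w!(i+N+a) = u!(i+a) + N"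
    using assms True by auto
  from this[of 0] this[of 1] this[of 2] this[of 3] this[of 4] show ?thesis
    unfolding occ_at_iff using assms(1) True by (auto simp: ac_simps)
qed (use assms in \<open>auto simp: occ_at_iff\<close>)

lemma finite_occs: "finite (occs w)"
  by (rule finite_subset[of _ "{..length w}"]) (auto dest: occs_imp_length)

text \<open>Successive occurrences in a cluster are at distance \<open>3\<close> or \<open>4\<close> (at least \<open>3\<close> by
  \<open>occ_at_gap\<close>, less than \<open>5\<close> because they overlap), so a cluster is a chain of
  occurrences reaching from the first to the last position.\<close>

definition is_chain :: "nat list \<Rightarrow> bool" where
  "is_chain w \<longleftrightarrow> 5 \<le> length w \<and> 0 \<in> occs w \<and> length w - 5 \<in> occs w \<and>
     (\<forall>i\<in>occs w. i < length w - 5 \<longrightarrow> i + 3 \<in> occs w \<or> i + 4 \<in> occs w)"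

lemma chain_next_occ:
  assumes "is_chain w" "i \<in> occs w" "j \<in> occs w" "i < j" "\<forall>l\<in>occs w. \<not> (i < l \<and> l < j)"
  shows "j = i + 3 \<or> j = i + 4"
proof -
  have "i < length w - 5"
    using occs_imp_length[OF assms(3)] assms(4) by auto
  then have "i + 3 \<in> occs w \<or> i + 4 \<in> occs w"
    using assms(1,2) by (auto simp: is_chain_def)
  moreover have "i + 3 \<le> j"
    using assms(2-4) occ_at_gap by (auto simp: occs_def)
  ultimately show ?thesis
    using assms(5) by force
qed

lemma chain_last_occ_before:
  assumes "is_chain w" "p < length w"
  obtains i where "i \<in> occs w" "i \<le> p" "p < i + 5"
proof -
  let ?S = "{l \<in> occs w. l \<le> p}"
  have "finite ?S" "0 \<in> ?S"
    using finite_occs assms(1) by (simp_all add: is_chain_def)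
  then have iS: "Max ?S \<in> ?S" and above: "\<And>l. l \<in> ?S \<Longrightarrow> l \<le> Max ?S"
    by (metis Max_in empty_iff) (simp add: \<open>finite ?S\<close>)
  have "p < Max ?S + 5"
  proof (rule ccontr)
    assume far: "\<not> p < Max ?S + 5"
    then have "Max ?S < length w - 5"
      using assms(2) by auto
    then have "Max ?S + 3 \<in> occs w \<or> Max ?S + 4 \<in> occs w"
      using assms(1) iS by (auto simp: is_chain_def)
    then show False
      using above[of "Max ?S + 3"] above[of "Max ?S + 4"] far by auto
  qed
  then show ?thesis
    using that iS by blast
qed

lemma is_cluster_imp_chain:
  assumes "is_cluster k w" "length w > 0"
  shows "is_chain w"
proof -
  let ?O = "occs w" and ?n = "length w"
  have cov: "\<forall>p<?n. \<exists>i\<in>?O. i \<le> p \<and> p < i + 5"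
    and overlap: "\<forall>i\<in>?O. \<forall>j\<in>?O. i < j \<and> (\<forall>l\<in>?O. \<not> (i < l \<and> l < j)) \<longrightarrow> j < i + 5"
    using assms(1) by (auto simp: is_cluster_def pat_len_eq)
  from cov assms(2) have "0 \<in> ?O"
    by auto
  from cov assms(2) obtain i1 where i1: "i1 \<in> ?O" "?n - 1 < i1 + 5"
    by (meson diff_less zero_less_one)
  have "i1 + 5 \<le> ?n"
    using i1(1) by (rule occs_imp_length)
  moreover have "i1 = ?n - 5"
    using i1(2) calculation by linarith
  ultimately have last: "5 \<le> ?n" "?n - 5 \<in> ?O"
    using i1(1) by auto
  have "i + 3 \<in> ?O \<or> i + 4 \<in> ?O" if "i \<in> ?O" "i < ?n - 5" for i
  proof -
    let ?S = "{l \<in> ?O. i < l}"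
    have "finite ?S" "?n - 5 \<in> ?S"
      using finite_occs last that by auto
    then have jS: "Min ?S \<in> ?S" and below: "\<And>l. l \<in> ?S \<Longrightarrow> Min ?S \<le> l"
      by (metis Min_in empty_iff) (simp add: \<open>finite ?S\<close>)
    have "\<not> (i < l \<and> l < Min ?S)" if "l \<in> ?O" for l
    proof
      assume between: "i < l \<and> l < Min ?S"
      then have "Min ?S \<le> l"
        using that by (intro below) simp
      with between show False
        by simp
    qed
    then have "Min ?S < i + 5"
      using overlap that(1) jS by blast
    moreover have "i + 3 \<le> Min ?S"
      using jS that(1) occ_at_gap by (auto simp: occs_def)
    ultimately have "Min ?S = i + 3 \<or> Min ?S = i + 4"
      by auto
    then show ?thesis
      using jS by auto
  qed
  with \<open>0 \<in> ?O\<close> last show ?thesis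
    by (auto simp: is_chain_def)
qed

lemma chain_imp_is_cluster:
  assumes "is_chain w"
  shows "is_cluster (card (occs w)) w"
proof -
  have "\<exists>i\<in>occs w. i \<le> p \<and> p < i + 5" if "p < length w" for p
    using chain_last_occ_before[OF assms that] by blast
  moreover have "j < i + 5"
    if "i \<in> occs w" "j \<in> occs w" "i < j" "\<forall>l\<in>occs w. \<not> (i < l \<and> l < j)" for i j
    using chain_next_occ[OF assms that] by auto
  ultimately show ?thesis
    by (auto simp: is_cluster_def pat_len_eq)
qed

lemma is_cluster_iff_chain:
  assumes "length w > 0"
  shows "is_cluster k w \<longleftrightarrow> card (occs w) = k \<and> is_chain w"
  using is_cluster_imp_chain[OF _ assms] chain_imp_is_cluster
  by (auto simp: is_cluster_def)

lemma chain_first_le_occ: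
  assumes "is_chain u" "i \<in> occs u"
  shows "u!0 \<le> u!i"
  using assms(2)
proof (induction i rule: less_induct)
  case (less i)
  show ?case
  proof (cases "i = 0")
    case False
    let ?S = "{l \<in> occs u. l < i}"
    have "finite ?S" "0 \<in> ?S"
      using finite_occs assms(1) False by (auto simp: is_chain_def)
    then have pS: "Max ?S \<in> ?S" and above: "\<And>l. l \<in> ?S \<Longrightarrow> l \<le> Max ?S"
      by (metis Max_in empty_iff) (simp add: \<open>finite ?S\<close>)
    have "\<not> (Max ?S < l \<and> l < i)" if "l \<in> occs u" for l
    proof
      assume between: "Max ?S < l \<and> l < i"
      then have "l \<le> Max ?S"
        using that by (intro above) simp
      with between show False
        by simp
    qed
    moreover have "Max ?S \<in> occs u" "Max ?S < i"
      using pS by auto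
    ultimately have "i = Max ?S + 3 \<or> i = Max ?S + 4"
      using chain_next_occ[OF assms(1) _ less.prems] by blast
    then have "u!(Max ?S) \<le> u!i"
      using occ_at_order[of u "Max ?S"] pS by (auto simp: occs_def)
    moreover have "u!0 \<le> u!(Max ?S)"
      using less.IH pS by auto
    ultimately show ?thesis
      by simp
  qed simp
qed

lemma chain_first_le:
  assumes "is_chain u" "p < length u"
  shows "u!0 \<le> u!p"
proof -
  obtain i where i: "i \<in> occs u" "i \<le> p" "p < i + 5"
    using chain_last_occ_before[OF assms] .
  then have "p = i \<or> p = i+1 \<or> p = i+2 \<or> p = i+3 \<or> p = i+4"
    by auto
  then have "u!i \<le> u!p"
    using occ_at_order[of u i] i(1) by (auto simp: occs_def)
  then show ?thesis
    using chain_first_le_occ[OF assms(1) i(1)] by simp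
qed

lemma run_max:
  assumes "\<forall>i<j. occ_at w (3*i)" "1 \<le> j" "p \<le> 3*j+1"
  shows "w!p \<le> w!(3*j+1)"
  using assms
proof (induction j arbitrary: p)
  case (Suc j)
  show ?case
  proof (cases "j = 0")
    case True
    then have "occ_at w 0"
      using Suc.prems(1) by auto
    then have "5 \<le> length w \<and> w!0 < w!3 \<and> w!3 < w!1 \<and> w!1 < w!2 \<and> w!2 < w!4"
      unfolding occ_at_iff by (simp only: add_0_left)
    moreover have "p = 0 \<or> p = 1 \<or> p = 2 \<or> p = 3 \<or> p = 4"
      using Suc.prems(3) True by auto
    ultimately show ?thesis
      using True by (elim disjE) auto
  next
    case False
    have occ: "occ_at w (3*j)"
      using Suc.prems(1) by auto
    have step: "w!(3*j+1) < w!(3 * Suc j + 1)"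
      using occ_at_order(5)[OF occ] by (simp add: add.commute)
    show ?thesis
    proof (cases "p \<le> 3*j+1")
      case True
      then show ?thesis
        using Suc.IH[of p] Suc.prems(1) False step by auto
    next
      case False
      then have "p = 3*j+2 \<or> p = 3*j+3 \<or> p = 3*j+4"
        using Suc.prems(3) by auto
      then show ?thesis
        using occ_at_order[OF occ] by (auto simp: add.commute)
    qed
  qed
qed simp

section \<open>Gluing a run and a cluster\<close>

lemma length_perm: "w \<in> permutations_of_set {1..m} \<Longrightarrow> length w = m"
  by (simp add: length_finite_permutations_of_set)

lemma perm_nth_mem: "w \<in> permutations_of_set {1..m} \<Longrightarrow> p < m \<Longrightarrow> w!p \<in> {1..m}"
  by (metis nth_mem length_perm permutations_of_setD(1))

lemma perm_obtain_index:
  assumes "w \<in> permutations_of_set {1..m}" "x \<in> {1..m}"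
  obtains p where "p < m" "w!p = x"
  by (metis assms in_set_conv_nth length_perm permutations_of_setD(1))

lemma perm_min_eq_1:
  assumes "w \<in> permutations_of_set {1..m}" "1 \<le> m" "\<And>p. p < m \<Longrightarrow> w!q \<le> w!p" "q < m"
  shows "w!q = 1"
proof -
  obtain p where "p < m" "w!p = 1"
    using perm_obtain_index[OF assms(1), of 1] assms(2) by auto
  then show ?thesis
    using assms(3)[of p] perm_nth_mem[OF assms(1,4)] by simp
qed

lemma perm_max_eq_m:
  assumes "w \<in> permutations_of_set {1..m}" "\<And>p. p < m \<Longrightarrow> w!p \<le> w!q" "q < m"
  shows "w!q = m"
proof -
  obtain p where "p < m" "w!p = m"
    using perm_obtain_index[OF assms(1), of m] assms(3) by auto
  then show ?thesis
    using assms(2)[of p] perm_nth_mem[OF assms(1,3)] by simp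
qed

text \<open>A cluster whose occurrences start at \<open>0, 3, \<dots>, 3 (j - 1)\<close> but not at \<open>3 j\<close> begins
  with a permutation of \<open>{1..3 j + 2}\<close> of the following kind.\<close>

definition run_perms :: "nat \<Rightarrow> nat list set" where
  "run_perms j = {v \<in> permutations_of_set {1..3*j+2}. \<forall>i<j. occ_at v (3*i)}"

definition cluster_set :: "nat \<Rightarrow> nat \<Rightarrow> nat list set" where
  "cluster_set m k = (if m < 5 then (if m = 1 \<and> k = 0 then {[1]} else {})
     else {w \<in> permutations_of_set {1..m}. is_cluster k w})"

text \<open>Gluing identifies the last (largest) entry of \<open>v \<in> run_perms j\<close> with the first
  (smallest) entry of the shifted cluster \<open>u\<close>.\<close>

definition glue :: "nat \<Rightarrow> nat list \<Rightarrow> nat list \<Rightarrow> nat list" where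
  "glue j v u = v @ map (\<lambda>x. x + (3*j+1)) (tl u)"

lemma card_cluster_set: "card (cluster_set m k) = s_num m k"
  by (simp add: cluster_set_def s_num_def pat_len_eq)

lemma finite_run_perms: "finite (run_perms j)"
  by (rule finite_subset[of _ "permutations_of_set {1..3*j+2}"]) (auto simp: run_perms_def)

lemma finite_cluster_set: "finite (cluster_set m k)"
proof -
  have "{w \<in> permutations_of_set {1..m}. is_cluster k w} \<subseteq> permutations_of_set {1..m}"
    by auto
  then show ?thesis
    by (auto simp: cluster_set_def intro: finite_subset)
qed

lemma run_perms_nth_last:
  assumes "v \<in> run_perms j" "1 \<le> j"
  shows "v!(3*j+1) = 3*j+2"
proof -
  have p: "v \<in> permutations_of_set {1..3*j+2}" and run: "\<forall>i<j. occ_at v (3*i)"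
    using assms(1) by (auto simp: run_perms_def)
  show ?thesis
    by (rule perm_max_eq_m[OF p]) (use run_max[OF run assms(2)] in auto)
qed

lemma occs_run_perms:
  assumes "v \<in> run_perms j"
  shows "occs v = (\<lambda>i. 3*i) ` {..<j}"
proof
  have p: "v \<in> permutations_of_set {1..3*j+2}" and run: "\<forall>i<j. occ_at v (3*i)"
    using assms by (auto simp: run_perms_def)
  show "(\<lambda>i. 3*i) ` {..<j} \<subseteq> occs v"
    using run by (auto simp: occs_def)
  show "occs v \<subseteq> (\<lambda>i. 3*i) ` {..<j}"
  proof
    fix i
    assume i: "i \<in> occs v"
    then have "i + 5 \<le> 3*j+2"
      using occs_imp_length length_perm[OF p] by fastforce
    then have ij: "i div 3 < j"
      by linarith
    then have "occ_at v (3 * (i div 3))"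
      using run by auto
    moreover have "3 * (i div 3) \<le> i" "i < 3 * (i div 3) + 3"
      by linarith+
    ultimately have "i = 3 * (i div 3)"
      using occ_at_gap[of v "3 * (i div 3)" i] i
      by (metis occs_def le_neq_implies_less mem_Collect_eq not_le)
    then show "i \<in> (\<lambda>i. 3*i) ` {..<j}"
      using ij by blast
  qed
qed

lemma cluster_set_cases:
  assumes "u \<in> cluster_set m k"
  shows "u \<in> permutations_of_set {1..m}" "u!0 = 1"
    "m = 1 \<and> k = 0 \<and> occs u = {} \<or> 5 \<le> m \<and> is_chain u \<and> card (occs u) = k"
proof -
  have "u \<in> permutations_of_set {1..m} \<and> u!0 = 1 \<and>
      (m = 1 \<and> k = 0 \<and> occs u = {} \<or> 5 \<le> m \<and> is_chain u \<and> card (occs u) = k)"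
  proof (cases "m < 5")
    case True
    then have "m = 1" "k = 0" "u = [1]"
      using assms by (auto simp: cluster_set_def split: if_splits)
    moreover have "occs [1] = {}"
      by (auto simp: occs_def occ_at_iff)
    ultimately show ?thesis
      by (simp add: permutations_of_set_def)
  next
    case False
    then have p: "u \<in> permutations_of_set {1..m}" and c: "is_cluster k u"
      using assms by (auto simp: cluster_set_def)
    then have chain: "is_chain u" "card (occs u) = k"
      using is_cluster_iff_chain length_perm False by auto
    have "u!0 = 1"
      using perm_min_eq_1[OF p] chain_first_le[OF chain(1)] length_perm[OF p] False by auto
    then show ?thesis
      using False p chain by simp
  qed
  then show "u \<in> permutations_of_set {1..m}" "u!0 = 1"
    "m = 1 \<and> k = 0 \<and> occs u = {} \<or> 5 \<le> m \<and> is_chain u \<and> card (occs u) = k"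
    by auto
qed

lemma cluster_set_tl:
  assumes "u \<in> cluster_set m k"
  shows "u = 1 # tl u" "set (tl u) = {2..m}" "distinct (tl u)"
proof -
  have p: "u \<in> permutations_of_set {1..m}" and u0: "u!0 = 1" and m: "1 \<le> m"
    using cluster_set_cases[OF assms] by auto
  then obtain t where t: "u = 1 # t"
    using length_perm[OF p] by (cases u) auto
  then have set1: "set (1 # t) = {1..m}" and "distinct (1 # t)"
    using p by (simp_all add: permutations_of_set_def)
  then have "1 \<notin> set t" "distinct t"
    by simp_all
  then have "set t = set (1 # t) - {1}"
    by simp
  also have "\<dots> = {2..m}"
    unfolding set1 by auto
  finally show "set (tl u) = {2..m}"
    using t by simp
  show "u = 1 # tl u" "distinct (tl u)"
    using t \<open>distinct t\<close> by simp_all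
qed

lemma length_glue:
  assumes "v \<in> run_perms j" "u \<in> cluster_set m k"
  shows "length (glue j v u) = 3*j+1+m"
proof -
  have "length u = m" "1 \<le> m"
    using cluster_set_cases[OF assms(2)] length_perm by auto
  then show ?thesis
    using assms(1) by (auto simp: glue_def run_perms_def length_perm)
qed

lemma glue_nth_prefix:
  "v \<in> run_perms j \<Longrightarrow> p < 3*j+2 \<Longrightarrow> glue j v u ! p = v!p"
  by (auto simp: glue_def run_perms_def length_perm nth_append)

lemma glue_nth_suffix:
  assumes "v \<in> run_perms j" "1 \<le> j" "u \<in> cluster_set m k" "3*j+1 \<le> p" "p < 3*j+1+m"
  shows "glue j v u ! p = u!(p - (3*j+1)) + (3*j+1)"
proof (cases "p = 3*j+1")
  case True
  then show ?thesis
    using run_perms_nth_last[OF assms(1,2)] glue_nth_prefix[OF assms(1)] cluster_set_cases(2)[OF assms(3)]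
    by simp
next
  case False
  have lv: "length v = 3*j+2" and lu: "length u = m"
    using assms(1,3) cluster_set_cases(1) by (auto simp: run_perms_def length_perm)
  have "glue j v u ! p = map (\<lambda>x. x + (3*j+1)) (tl u) ! (p - (3*j+2))"
    using False assms(4) lv by (simp add: glue_def nth_append)
  also have "\<dots> = tl u ! (p - (3*j+2)) + (3*j+1)"
    using assms(5) lu False assms(4) by simp
  also have "\<dots> = u ! (p - (3*j+1)) + (3*j+1)"
    using assms(5) lu False assms(4) by (simp add: nth_tl Suc_diff_Suc)
  finally show ?thesis .
qed

lemma occ_at_glue_prefix:
  assumes "v \<in> run_perms j" "u \<in> cluster_set m k" "i + 5 \<le> 3*j+2"
  shows "occ_at (glue j v u) i \<longleftrightarrow> occ_at v i"
proof (rule occ_at_prefix)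
  have "length v = 3*j+2"
    using assms(1) by (simp add: run_perms_def length_perm)
  then show "length v \<le> length (glue j v u)" "i + 5 \<le> length v"
    using assms(3) by (simp_all add: glue_def)
  show "\<forall>p<length v. glue j v u ! p = v!p"
    using \<open>length v = 3*j+2\<close> glue_nth_prefix[OF assms(1)] by simp
qed

lemma occ_at_glue_suffix:
  assumes "v \<in> run_perms j" "1 \<le> j" "u \<in> cluster_set m k"
  shows "occ_at (glue j v u) (i + (3*j+1)) \<longleftrightarrow> occ_at u i"
proof (rule occ_at_shifted_suffix)
  show "length (glue j v u) = 3*j+1 + length u"
    using length_glue[OF assms(1,3)] cluster_set_cases(1)[OF assms(3)] by (simp add: length_perm)
  then show "\<forall>p. 3*j+1 \<le> p \<longrightarrow> p < length (glue j v u) \<longrightarrow> glue j v u ! p = u!(p - (3*j+1)) + (3*j+1)"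
    using glue_nth_suffix[OF assms] cluster_set_cases(1)[OF assms(3)] by (simp add: length_perm)
qed

text \<open>An occurrence straddling the junction would start at \<open>3 j\<close>, too close to the last
  occurrence \<open>3 j - 3\<close> of the run (and to the first occurrence \<open>3 j + 1\<close> of \<open>u\<close>).\<close>

lemma glue_no_straddling_occ:
  assumes "v \<in> run_perms j" "1 \<le> j" "u \<in> cluster_set m k" "3*j+2 < i + 5" "i < 3*j+1"
  shows "\<not> occ_at (glue j v u) i"
proof
  assume occ: "occ_at (glue j v u) i"
  have "occ_at v (3*(j-1))"
    using assms(1,2) by (auto simp: run_perms_def)
  then have last_run: "occ_at (glue j v u) (3*j-3)"
    using occ_at_glue_prefix[OF assms(1,3), of "3*j-3"] assms(2) by (simp add: right_diff_distrib')
  have "3*j-3 + 3 \<le> i"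
    using occ_at_gap[OF last_run occ] assms(2,4) by linarith
  then have "i = 3*j"
    using assms(2,5) by linarith
  show False
  proof (cases "5 \<le> m")
    case True
    then have "occ_at u 0"
      using cluster_set_cases(3)[OF assms(3)] by (auto simp: is_chain_def occs_def)
    then have "occ_at (glue j v u) (0 + (3*j+1))"
      using occ_at_glue_suffix[OF assms(1-3)] by blast
    then show False
      using occ_at_gap[OF occ, of "3*j+1"] \<open>i = 3*j\<close> by simp
  next
    case False
    then have "m = 1"
      using cluster_set_cases(3)[OF assms(3)] by auto
    then show False
      using occ_at_imp_length[OF occ] length_glue[OF assms(1,3)] \<open>i = 3*j\<close> by simp
  qed
qed

lemma occs_glue:
  assumes "v \<in> run_perms j" "1 \<le> j" "u \<in> cluster_set m k"
  shows "occs (glue j v u) = occs v \<union> (\<lambda>i. i + (3*j+1)) ` occs u"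
proof (rule set_eqI)
  fix i
  let ?w = "glue j v u" and ?N = "3*j+1"
  have v_short: "occ_at v i \<Longrightarrow> i + 5 \<le> 3*j+2"
    using occ_at_imp_length assms(1) by (fastforce simp: run_perms_def length_perm)
  consider "i + 5 \<le> 3*j+2" | "3*j+2 < i + 5" "?N \<le> i" | "3*j+2 < i + 5" "i < ?N"
    by linarith
  then show "i \<in> occs ?w \<longleftrightarrow> i \<in> occs v \<union> (\<lambda>i. i + ?N) ` occs u"
  proof cases
    case 1
    then show ?thesis
      using occ_at_glue_prefix[OF assms(1,3)] by (auto simp: occs_def)
  next
    case 2
    then have "occ_at ?w i \<longleftrightarrow> occ_at u (i - ?N)"
      using occ_at_glue_suffix[OF assms, of "i - ?N"] by simp
    then show ?thesis
      using 2 v_short by (force simp: occs_def)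
  next
    case 3
    then have "\<not> occ_at v i" "\<not> occ_at ?w i"
      using v_short glue_no_straddling_occ[OF assms] by force+
    then show ?thesis
      using 3 by (auto simp: occs_def)
  qed
qed

lemma card_occs_glue:
  assumes "v \<in> run_perms j" "1 \<le> j" "u \<in> cluster_set m k"
  shows "card (occs (glue j v u)) = j + card (occs u)"
proof -
  let ?N = "3*j+1"
  have "card (occs v) = j"
    unfolding occs_run_perms[OF assms(1)] by (subst card_image) (auto simp: inj_on_def)
  moreover have "card ((\<lambda>i. i + ?N) ` occs u) = card (occs u)"
    by (subst card_image) (auto simp: inj_on_def)
  moreover have "occs v \<inter> (\<lambda>i. i + ?N) ` occs u = {}"
    unfolding occs_run_perms[OF assms(1)] by auto
  ultimately show ?thesis
    unfolding occs_glue[OF assms] by (subst card_Un_disjoint) (use finite_occs in auto)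
qed

lemma glue_perm:
  assumes "v \<in> run_perms j" "u \<in> cluster_set m k"
  shows "glue j v u \<in> permutations_of_set {1..3*j+1+m}"
proof -
  have v: "set v = {1..3*j+2}" "distinct v"
    using assms(1) by (auto simp: run_perms_def permutations_of_set_def)
  note u = cluster_set_tl[OF assms(2)]
  have "1 \<le> m"
    using cluster_set_cases(3)[OF assms(2)] by auto
  have "(\<lambda>x. x + (3*j+1)) ` {2..m} = {3*j+3..3*j+1+m}"
  proof (rule set_eqI, rule iffI)
    fix x
    assume "x \<in> {3*j+3..3*j+1+m}"
    then have "x = (x - (3*j+1)) + (3*j+1)" "x - (3*j+1) \<in> {2..m}"
      by auto
    then show "x \<in> (\<lambda>x. x + (3*j+1)) ` {2..m}"
      by (rule image_eqI)
  qed auto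
  then have "set (map (\<lambda>x. x + (3*j+1)) (tl u)) = {3*j+3..3*j+1+m}"
    using u(2) by simp
  then have "set (glue j v u) = {1..3*j+1+m}" "distinct (glue j v u)"
    using v u(3) \<open>1 \<le> m\<close> by (auto simp: glue_def distinct_map inj_on_def)
  then show ?thesis
    by (simp add: permutations_of_set_def)
qed

lemma glue_is_chain:
  assumes "v \<in> run_perms j" "1 \<le> j" "u \<in> cluster_set m k"
  shows "is_chain (glue j v u)"
  unfolding is_chain_def
proof (intro conjI ballI impI)
  let ?w = "glue j v u" and ?N = "3*j+1"
  note occs_w = occs_glue[OF assms] and occs_v = occs_run_perms[OF assms(1)]
  note u = cluster_set_cases[OF assms(3)]
  have lw: "length ?w = ?N + m"
    using length_glue[OF assms(1,3)] by simp
  show "5 \<le> length ?w"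
    using lw assms(2) u(3) by auto
  show "0 \<in> occs ?w"
    using occs_w occs_v assms(2) by auto
  show "length ?w - 5 \<in> occs ?w"
  proof (cases "m = 1")
    case True
    then have "length ?w - 5 = 3*(j-1)"
      using lw assms(2) by simp
    then show ?thesis
      using occs_w occs_v assms(2) by auto
  next
    case False
    then have "5 \<le> m" "m - 5 \<in> occs u"
      using u(3) length_perm[OF u(1)] by (auto simp: is_chain_def)
    moreover have "length ?w - 5 = (m - 5) + ?N"
      using lw \<open>5 \<le> m\<close> by simp
    ultimately show ?thesis
      unfolding occs_w by (metis UnI2 image_eqI)
  qed
  fix i
  assume i: "i \<in> occs ?w" "i < length ?w - 5"
  show "i + 3 \<in> occs ?w \<or> i + 4 \<in> occs ?w"
  proof (cases "i \<in> occs v")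
    case True
    then obtain i' where i': "i' < j" "i = 3*i'"
      using occs_v by auto
    show ?thesis
    proof (cases "i' + 1 < j")
      case True
      then have "i + 3 \<in> occs v"
        using occs_v i' by (auto simp: image_iff intro!: bexI[of _ "i'+1"])
      then show ?thesis
        using occs_w by auto
    next
      case False
      then have "i + 4 = 0 + ?N" "m \<noteq> 1"
        using i i' lw by auto
      moreover have "0 \<in> occs u"
        using u(3) \<open>m \<noteq> 1\<close> by (auto simp: is_chain_def)
      ultimately show ?thesis
        using occs_w by (metis UnI2 image_eqI)
    qed
  next
    case False
    then obtain i'' where i'': "i'' \<in> occs u" "i = i'' + ?N"
      using occs_w i by auto
    then have "5 \<le> m" "is_chain u"
      using u(3) by auto
    moreover have "i'' < length u - 5"
      using i i'' lw length_perm[OF u(1)] by auto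
    ultimately have "i'' + 3 \<in> occs u \<or> i'' + 4 \<in> occs u"
      using i'' by (auto simp: is_chain_def)
    then show ?thesis
      using occs_w i'' by (auto simp: image_iff ac_simps)
  qed
qed

lemma glue_in_cluster_set:
  assumes "v \<in> run_perms j" "1 \<le> j" "u \<in> cluster_set m k"
  shows "glue j v u \<in> cluster_set (3*j+1+m) (j+k)"
proof -
  have "card (occs u) = k" "1 \<le> m"
    using cluster_set_cases(3)[OF assms(3)] by auto
  then have "is_cluster (j+k) (glue j v u)"
    using chain_imp_is_cluster[OF glue_is_chain[OF assms]] card_occs_glue[OF assms] by simp
  then show ?thesis
    using glue_perm[OF assms(1,3)] assms(2) \<open>1 \<le> m\<close> by (simp add: cluster_set_def)
qed

lemma glue_inj:
  assumes "v \<in> run_perms j" "v' \<in> run_perms j" "u \<in> cluster_set m k" "u' \<in> cluster_set m' k'"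
    and "glue j v u = glue j v' u'"
  shows "v = v'" "u = u'"
proof -
  have "length v = 3*j+2" "length v' = 3*j+2"
    using assms(1,2) by (auto simp: run_perms_def length_perm)
  then have "take (3*j+2) (glue j v u) = v" "take (3*j+2) (glue j v' u') = v'"
    "drop (3*j+2) (glue j v u) = map (\<lambda>x. x + (3*j+1)) (tl u)"
    "drop (3*j+2) (glue j v' u') = map (\<lambda>x. x + (3*j+1)) (tl u')"
    by (simp_all add: glue_def)
  then have "v = v'" "tl u = tl u'"
    using assms(5) by (auto simp: inj_map_eq_map inj_on_def)
  then show "v = v'" "u = u'"
    using cluster_set_tl(1)[OF assms(3)] cluster_set_tl(1)[OF assms(4)] by metis+
qed

section \<open>Decomposition of clusters\<close>

lemma is_chain_drop:
  assumes "is_chain w" "N \<in> occs w"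
  shows "is_chain (drop N w)"
proof -
  have occs_drop: "occs (drop N w) = {i. i + N \<in> occs w}"
    by (simp add: occs_def occ_at_drop)
  have len: "N + 5 \<le> length w"
    using occs_imp_length[OF assms(2)] by simp
  have "length w - N - 5 + N = length w - 5"
    using len by simp
  then have last: "length (drop N w) - 5 \<in> occs (drop N w)"
    using assms(1) occs_drop by (simp add: is_chain_def)
  have "i + 3 \<in> occs (drop N w) \<or> i + 4 \<in> occs (drop N w)"
    if "i \<in> occs (drop N w)" "i < length (drop N w) - 5" for i
  proof -
    have "i + N \<in> occs w" "i + N < length w - 5"
      using that occs_drop by auto
    then have "i + N + 3 \<in> occs w \<or> i + N + 4 \<in> occs w"
      using assms(1) by (simp add: is_chain_def)
    then show ?thesis
      using occs_drop by (simp add: algebra_simps)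
  qed
  then show ?thesis
    using len last assms(2) occs_drop by (simp add: is_chain_def)
qed

lemma cluster_first_run:
  assumes "is_chain w"
  obtains j where "1 \<le> j" "\<forall>i<j. 3*i \<in> occs w" "3*j \<notin> occs w" "3*j+2 \<le> length w"
    "length w = 3*j+2 \<or> 3*j+1 \<in> occs w"
proof -
  let ?O = "occs w" and ?n = "length w"
  have "3 * ?n \<notin> ?O"
    using occs_imp_length[of "3 * ?n" w] assms by (auto simp: is_chain_def)
  then have ex: "\<exists>j. 3*j \<notin> ?O" ..
  define j where "j = (LEAST j. 3*j \<notin> ?O)"
  have j: "3*j \<notin> ?O"
    unfolding j_def by (rule LeastI_ex[OF ex])
  have below: "\<forall>i<j. 3*i \<in> ?O"
    unfolding j_def using not_less_Least by blast
  obtain i where i: "j = Suc i"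
    using j assms by (cases j) (auto simp: is_chain_def)
  then have prev: "3*i \<in> ?O"
    using below by simp
  then have "3*i + 5 \<le> ?n"
    by (rule occs_imp_length)
  then have "3*j+2 \<le> ?n"
    using i by simp
  moreover have "?n = 3*j+2 \<or> 3*j+1 \<in> ?O"
  proof (cases "3*i = ?n - 5")
    case True
    then have "?n = 3*j+2"
      using i \<open>3*i + 5 \<le> ?n\<close> by linarith
    then show ?thesis ..
  next
    case False
    then have "3*i + 3 \<in> ?O \<or> 3*i + 4 \<in> ?O"
      using assms prev \<open>3*i + 5 \<le> ?n\<close> by (auto simp: is_chain_def)
    then have "3*j \<in> ?O \<or> 3*j+1 \<in> ?O"
      using i by (simp add: ac_simps)
    then show ?thesis
      using j by blast
  qed
  ultimately show ?thesis
    using i below j by (intro that) auto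
qed

lemma perm_split_at_pivot:
  assumes p: "w \<in> permutations_of_set {1..n}" and "N < n"
    and before: "\<forall>p\<le>N. w!p \<le> w!N" and after: "\<forall>p. N \<le> p \<longrightarrow> p < n \<longrightarrow> w!N \<le> w!p"
  shows "w!N = N+1" "set (take (N+1) w) = {1..N+1}" "set (drop N w) = {N+1..n}"
proof -
  have l: "length w = n" and d: "distinct w"
    using p by (simp_all add: length_perm permutations_of_set_def)
  let ?A = "set (take (N+1) w)" and ?B = "set (drop N w)"
  have A: "?A \<subseteq> {1..w!N}"
  proof
    fix x
    assume "x \<in> ?A"
    then obtain q where "q < length (take (N+1) w)" "x = take (N+1) w ! q"
      by (metis in_set_conv_nth)
    then have "q \<le> N" "q < n" "x = w!q"
      using l \<open>N < n\<close> by auto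
    then show "x \<in> {1..w!N}"
      using before perm_nth_mem[OF p] by force
  qed
  have B: "?B \<subseteq> {w!N..n}"
  proof
    fix x
    assume "x \<in> ?B"
    then obtain q where "q < length (drop N w)" "x = drop N w ! q"
      by (metis in_set_conv_nth)
    then have "N + q < n" "x = w!(N+q)"
      using l by auto
    then show "x \<in> {w!N..n}"
      using after perm_nth_mem[OF p] by force
  qed
  have cA: "card ?A = N+1" and cB: "card ?B = n - N"
    using d l \<open>N < n\<close> by (simp_all add: distinct_card)
  have "N+1 \<le> w!N" "n - N \<le> n + 1 - w!N" "w!N \<le> n"
    using card_mono[OF _ A] card_mono[OF _ B] cA cB perm_nth_mem[OF p \<open>N < n\<close>] by auto
  then show e: "w!N = N+1"
    using \<open>N < n\<close> by linarith
  show "?A = {1..N+1}"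
    using card_subset_eq[of "{1..N+1}" ?A] A cA e by simp
  show "?B = {N+1..n}"
    using card_subset_eq[of "{N+1..n}" ?B] B cB e \<open>N < n\<close> by simp
qed

lemma glue_take_drop:
  assumes "3*j+1 < length w" "set (drop (3*j+1) w) \<subseteq> {3*j+2..}"
  shows "glue j (take (3*j+2) w) (map (\<lambda>x. x - (3*j+1)) (drop (3*j+1) w)) = w"
proof -
  let ?N = "3*j+1"
  have "set (drop (Suc ?N) w) \<subseteq> set (drop ?N w)"
    by (simp add: set_drop_subset_set_drop)
  then have "map (\<lambda>x. x - ?N + ?N) (drop (Suc ?N) w) = drop (Suc ?N) w"
    using assms(2) by (intro map_idI) auto
  then have "map (\<lambda>x. x + ?N) (tl (map (\<lambda>x. x - ?N) (drop ?N w))) = drop (3*j+2) w"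
    by (simp add: drop_Suc tl_drop map_tl[symmetric] comp_def)
  then show ?thesis
    by (simp add: glue_def)
qed

lemma perm_shift_down:
  fixes N m :: nat
  assumes "set d = {N+1..N+m}" "distinct d"
  shows "map (\<lambda>x. x - N) d \<in> permutations_of_set {1..m}"
proof -
  have "{N+1..N+m} = (\<lambda>x. x + N) ` {1..m}"
    using image_add_atLeastAtMost'[of N 1 m] by (simp add: ac_simps)
  then have "(\<lambda>x. x - N) ` {N+1..N+m} = {1..m}"
    by (simp add: image_image del: image_add_atLeastAtMost')
  moreover have "inj_on (\<lambda>x. x - N) (set d)"
    using assms(1) by (auto simp: inj_on_def)
  ultimately show ?thesis
    using assms by (simp add: permutations_of_set_def distinct_map)
qed

text \<open>The entry at the junction \<open>3 j + 1\<close> is the maximum of the run and the minimum of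
  the tail, hence equal to \<open>3 j + 2\<close>.\<close>

lemma cluster_junction_pivot:
  assumes p: "w \<in> permutations_of_set {1..n}" and run: "\<forall>i<j. occ_at w (3*i)" and "1 \<le> j"
    and "3*j+1 < n" and tail: "n = 3*j+2 \<or> is_chain (drop (3*j+1) w)"
  shows "w!(3*j+1) = 3*j+2" "set (take (3*j+2) w) = {1..3*j+2}" "set (drop (3*j+1) w) = {3*j+2..n}"
proof -
  let ?N = "3*j+1"
  have before: "\<forall>p\<le>?N. w!p \<le> w!?N"
    using run_max[OF run \<open>1 \<le> j\<close>] by simp
  have after: "\<forall>p. ?N \<le> p \<longrightarrow> p < n \<longrightarrow> w!?N \<le> w!p"
  proof (intro allI impI)
    fix p
    assume "?N \<le> p" "p < n"
    show "w!?N \<le> w!p"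
    proof (cases "n = 3*j+2")
      case True
      then show ?thesis
        using \<open>?N \<le> p\<close> \<open>p < n\<close> by (simp add: le_antisym less_Suc_eq_le)
    next
      case False
      then show ?thesis
        using tail chain_first_le[of "drop ?N w" "p - ?N"] length_perm[OF p] \<open>?N \<le> p\<close> \<open>p < n\<close>
        by simp
    qed
  qed
  show "w!(3*j+1) = 3*j+2" "set (take (3*j+2) w) = {1..3*j+2}" "set (drop (3*j+1) w) = {3*j+2..n}"
    using perm_split_at_pivot[OF p \<open>?N < n\<close> before after] by simp_all
qed

lemma shift_down_in_cluster_set:
  fixes N m :: nat
  assumes "set d = {N+1..N+m}" "distinct d" "m = 1 \<or> 5 \<le> m \<and> is_chain d"
  shows "map (\<lambda>x. x - N) d \<in> cluster_set m (card (occs d))"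
proof -
  let ?u = "map (\<lambda>x. x - N) d"
  have u_perm: "?u \<in> permutations_of_set {1..m}"
    using assms(1,2) by (rule perm_shift_down)
  have "occ_at ?u i \<longleftrightarrow> occ_at d i" for i
    by (rule occ_at_map_order_iso) (use assms(1) in auto)
  then have occs_u: "occs ?u = occs d"
    by (simp add: occs_def)
  show ?thesis
  proof (cases "m = 1")
    case True
    then have "?u = [1]"
      using u_perm length_perm[OF u_perm] by (cases ?u) (auto simp: permutations_of_set_def)
    moreover have "occs [1] = {}"
      by (auto simp: occs_def occ_at_iff)
    ultimately show ?thesis
      using True occs_u by (simp add: cluster_set_def)
  next
    case False
    then have "5 \<le> m" "is_chain ?u"
      using assms(3) occs_u length_perm[OF u_perm] by (auto simp: is_chain_def)
    then show ?thesis
      using chain_imp_is_cluster[OF \<open>is_chain ?u\<close>] u_perm occs_u by (simp add: cluster_set_def)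
  qed
qed

lemma cluster_decompose:
  assumes "w \<in> cluster_set n k" "5 \<le> n"
  obtains j v u m k' where "1 \<le> j" "v \<in> run_perms j" "u \<in> cluster_set m k'"
    "n = 3*j+1+m" "k = j+k'" "w = glue j v u"
proof -
  have p: "w \<in> permutations_of_set {1..n}" and chain: "is_chain w" and card: "card (occs w) = k"
    using cluster_set_cases(1,3)[OF assms(1)] assms(2) by auto
  have lw: "length w = n"
    using length_perm[OF p] .
  obtain j where j: "1 \<le> j" "\<forall>i<j. 3*i \<in> occs w" "3*j+2 \<le> n" "n = 3*j+2 \<or> 3*j+1 \<in> occs w"
    using cluster_first_run[OF chain] lw by metis
  define N where "N = 3*j+1"
  define m where "m = n - N"
  define d where "d = drop N w"
  define v where "v = take (3*j+2) w"
  define u where "u = map (\<lambda>x. x - N) d"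
  have n: "n = N + m" "N < n"
    using j(3) by (simp_all add: m_def N_def)
  have tail: "m = 1 \<or> 5 \<le> m \<and> is_chain d"
  proof (cases "n = 3*j+2")
    case False
    then have "N \<in> occs w"
      using j(4) by (simp add: N_def)
    then show ?thesis
      using is_chain_drop[OF chain] occs_imp_length[of N w] lw by (auto simp: d_def m_def)
  qed (simp add: m_def N_def)
  have run: "\<forall>i<j. occ_at w (3*i)"
    using j(2) by (simp add: occs_def)
  have "3*j+1 < n" "n = 3*j+2 \<or> is_chain (drop (3*j+1) w)"
    using j(3) tail by (auto simp: m_def N_def d_def)
  note pivot = cluster_junction_pivot[OF p run j(1) this]
  have dw: "distinct w"
    using p by (simp add: permutations_of_set_def)
  have v: "v \<in> run_perms j"
    using pivot(2) dw run by (auto simp: v_def N_def run_perms_def permutations_of_set_def occ_at_take)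
  have u: "u \<in> cluster_set m (card (occs d))"
    unfolding u_def using pivot(3) dw n tail by (intro shift_down_in_cluster_set) (auto simp: d_def N_def)
  have "glue j v u = w"
    unfolding v_def u_def d_def N_def
  proof (rule glue_take_drop)
    show "3*j+1 < length w" "set (drop (3*j+1) w) \<subseteq> {3*j+2..}"
      using pivot(3) \<open>3*j+1 < n\<close> lw by auto
  qed
  moreover have "card (occs u) = card (occs d)"
    using cluster_set_cases(3)[OF u] by auto
  then have "k = j + card (occs d)"
    using card_occs_glue[OF v j(1) u] calculation card by simp
  ultimately show ?thesis
    using n by (intro that[OF j(1) v u]) (simp_all add: N_def)
qed

lemma glue_run_length:
  assumes "v \<in> run_perms j" "1 \<le> j" "u \<in> cluster_set m k"
  shows "(LEAST i. 3*i \<notin> occs (glue j v u)) = j"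
proof (rule Least_equality)
  show "3*j \<notin> occs (glue j v u)"
    using occs_glue[OF assms] occs_run_perms[OF assms(1)] by auto
  show "j \<le> i" if "3*i \<notin> occs (glue j v u)" for i
  proof (rule ccontr)
    assume "\<not> j \<le> i"
    then have "3*i \<in> occs v"
      using occs_run_perms[OF assms(1)] by auto
    then show False
      using that occs_glue[OF assms] by auto
  qed
qed

definition glued_clusters :: "nat \<Rightarrow> nat \<Rightarrow> nat \<Rightarrow> nat list set" where
  "glued_clusters n k j = (\<lambda>(v, u). glue j v u) ` (run_perms j \<times> cluster_set (n - (3*j+1)) (k - j))"

lemma cluster_set_eq_UN_glued_clusters:
  assumes "5 \<le> n"
  shows "cluster_set n k = (\<Union>j \<in> {j. 1 \<le> j \<and> 3*j+2 \<le> n \<and> j \<le> k}. glued_clusters n k j)"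
proof
  show "cluster_set n k \<subseteq> (\<Union>j \<in> {j. 1 \<le> j \<and> 3*j+2 \<le> n \<and> j \<le> k}. glued_clusters n k j)"
  proof
    fix w
    assume "w \<in> cluster_set n k"
    then obtain j v u m k' where d: "1 \<le> j" "v \<in> run_perms j" "u \<in> cluster_set m k'"
      "n = 3*j+1+m" "k = j+k'" "w = glue j v u"
      using cluster_decompose assms by metis
    have "1 \<le> m"
      using cluster_set_cases(3)[OF d(3)] by auto
    then have "3*j+2 \<le> n" "j \<le> k" "n - (3*j+1) = m" "k - j = k'"
      using d by simp_all
    moreover have "w \<in> glued_clusters n k j"
      unfolding glued_clusters_def using d calculation(3,4) by (auto intro!: image_eqI[of _ _ "(v, u)"])
    ultimately show "w \<in> (\<Union>j \<in> {j. 1 \<le> j \<and> 3*j+2 \<le> n \<and> j \<le> k}. glued_clusters n k j)"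
      using d(1) by blast
  qed
  show "(\<Union>j \<in> {j. 1 \<le> j \<and> 3*j+2 \<le> n \<and> j \<le> k}. glued_clusters n k j) \<subseteq> cluster_set n k"
  proof
    fix w
    assume "w \<in> (\<Union>j \<in> {j. 1 \<le> j \<and> 3*j+2 \<le> n \<and> j \<le> k}. glued_clusters n k j)"
    then obtain j v u where j: "1 \<le> j" "3*j+2 \<le> n" "j \<le> k" "v \<in> run_perms j"
      "u \<in> cluster_set (n - (3*j+1)) (k - j)" "w = glue j v u"
      by (auto simp: glued_clusters_def)
    have "glue j v u \<in> cluster_set (3*j+1 + (n - (3*j+1))) (j + (k - j))"
      using j by (intro glue_in_cluster_set) auto
    moreover have "3*j+1 + (n - (3*j+1)) = n" "j + (k - j) = k"
      using j(2,3) by auto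
    ultimately show "w \<in> cluster_set n k"
      using j(6) by simp
  qed
qed

lemma glued_clusters_disjoint:
  assumes "1 \<le> i" "1 \<le> j" "i \<noteq> j"
  shows "glued_clusters n k i \<inter> glued_clusters n k j = {}"
proof -
  have run_length: "(LEAST l'. 3*l' \<notin> occs w) = l" if "w \<in> glued_clusters n k l" "1 \<le> l" for w l
    using that glue_run_length by (auto simp: glued_clusters_def)
  show ?thesis
    using run_length[of _ i] run_length[of _ j] assms by blast
qed

lemma card_glued_clusters: "card (glued_clusters n k j) = card (run_perms j) * s_num (n - (3*j+1)) (k - j)"
proof -
  have "inj_on (\<lambda>(v, u). glue j v u) (run_perms j \<times> cluster_set (n - (3*j+1)) (k - j))"
  proof (rule inj_onI, clarify)
    fix v u v' u'
    assume "v \<in> run_perms j" "u \<in> cluster_set (n - (3*j+1)) (k - j)" "v' \<in> run_perms j"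
      "u' \<in> cluster_set (n - (3*j+1)) (k - j)" "glue j v u = glue j v' u'"
    then show "v = v' \<and> u = u'"
      using glue_inj by blast
  qed
  then show ?thesis
    by (simp add: glued_clusters_def card_image card_cartesian_product card_cluster_set)
qed

lemma s_num_rec:
  assumes "5 \<le> n"
  shows "s_num n k =
    (\<Sum>j | 1 \<le> j \<and> 3*j+2 \<le> n \<and> j \<le> k. card (run_perms j) * s_num (n - (3*j+1)) (k - j))"
proof -
  let ?J = "{j. 1 \<le> j \<and> 3*j+2 \<le> n \<and> j \<le> k}"
  have "finite ?J"
    by (rule finite_subset[of _ "{..n}"]) auto
  moreover have "finite (glued_clusters n k j)" for j
    using finite_run_perms finite_cluster_set by (simp add: glued_clusters_def)
  ultimately have "card (\<Union>j\<in>?J. glued_clusters n k j) = (\<Sum>j\<in>?J. card (glued_clusters n k j))"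
    using glued_clusters_disjoint by (intro card_UN_disjoint) auto
  then show ?thesis
    by (simp only: card_cluster_set[symmetric] cluster_set_eq_UN_glued_clusters[OF assms]
      card_glued_clusters)
qed

section \<open>Counting runs as linear extensions of a zigzag poset\<close>

definition index_of :: "'a list \<Rightarrow> 'a \<Rightarrow> nat" where
  "index_of u x = (LEAST i. u!i = x)"

lemma index_of_nth:
  assumes "distinct u" "i < length u"
  shows "index_of u (u!i) = i"
  unfolding index_of_def
proof (rule Least_equality)
  show "i \<le> y" if "u!y = u!i" for y
  proof (rule ccontr)
    assume "\<not> i \<le> y"
    then show False
      using nth_eq_iff_index_eq[OF assms(1), of y i] that assms(2) by simp
  qed
qed simp

lemma index_of_mem:
  assumes "distinct u" "x \<in> set u"
  shows "index_of u x < length u" "u!(index_of u x) = x"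
proof -
  obtain i where "i < length u" "u!i = x"
    using assms(2) by (auto simp: in_set_conv_nth)
  then show "index_of u x < length u" "u!(index_of u x) = x"
    using index_of_nth[OF assms(1)] by auto
qed

text \<open>A permutation \<open>v\<close> of \<open>{1..N}\<close> corresponds to the list \<open>u\<close> of its positions
  sorted by increasing value, a permutation of \<open>{0..<N}\<close>; \<open>v\<close> is recovered as the list of
  ranks of the positions in \<open>u\<close>.\<close>

definition ranks :: "nat \<Rightarrow> nat list \<Rightarrow> nat list" where
  "ranks N u = map (\<lambda>p. Suc (index_of u p)) [0..<N]"

definition positions_by_value :: "nat \<Rightarrow> nat list \<Rightarrow> nat list" where
  "positions_by_value N v = map (\<lambda>k. index_of v (Suc k)) [0..<N]"

lemma perm_atLeastLessThan_props:
  assumes "u \<in> permutations_of_set {0..<N}"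
  shows "distinct u" "set u = {0..<N}" "length u = N"
  using assms by (auto simp: permutations_of_set_def length_finite_permutations_of_set)

lemma perm_atLeastAtMost_props:
  assumes "v \<in> permutations_of_set {1..N}"
  shows "distinct v" "set v = {1..N}" "length v = N"
  using assms by (auto simp: permutations_of_set_def length_perm)

lemma distinct_map_upt_perm:
  assumes "inj_on f {0..<N}" "f ` {0..<N} \<subseteq> A" "card A = N" "finite A"
  shows "map f [0..<N] \<in> permutations_of_set A"
proof -
  have "distinct (map f [0..<N])"
    using assms(1) by (simp add: distinct_map)
  moreover have "set (map f [0..<N]) = A"
    using assms card_image[OF assms(1)] by (intro card_subset_eq) auto
  ultimately show ?thesis
    by (simp add: permutations_of_set_def)
qed

lemma ranks_perm:
  assumes "u \<in> permutations_of_set {0..<N}"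
  shows "ranks N u \<in> permutations_of_set {1..N}"
  unfolding ranks_def
proof (rule distinct_map_upt_perm)
  note u = perm_atLeastLessThan_props[OF assms]
  have pos: "p < N \<Longrightarrow> index_of u p < N \<and> u!(index_of u p) = p" for p
    using index_of_mem[OF u(1)] u by auto
  show "inj_on (\<lambda>p. Suc (index_of u p)) {0..<N}"
    by (rule inj_onI) (metis atLeastLessThan_iff nat.inject pos)
  show "(\<lambda>p. Suc (index_of u p)) ` {0..<N} \<subseteq> {1..N}"
    using pos by (auto simp: Suc_le_eq)
qed simp_all

lemma positions_by_value_perm:
  assumes "v \<in> permutations_of_set {1..N}"
  shows "positions_by_value N v \<in> permutations_of_set {0..<N}"
  unfolding positions_by_value_def
proof (rule distinct_map_upt_perm)
  note v = perm_atLeastAtMost_props[OF assms]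
  have pos: "k < N \<Longrightarrow> index_of v (Suc k) < N \<and> v!(index_of v (Suc k)) = Suc k" for k
    using index_of_mem[OF v(1)] v by auto
  show "inj_on (\<lambda>k. index_of v (Suc k)) {0..<N}"
    by (rule inj_onI) (metis atLeastLessThan_iff nat.inject pos)
  show "(\<lambda>k. index_of v (Suc k)) ` {0..<N} \<subseteq> {0..<N}"
    using pos by auto
qed simp_all

lemma positions_by_value_ranks:
  assumes "u \<in> permutations_of_set {0..<N}"
  shows "positions_by_value N (ranks N u) = u"
proof (rule nth_equalityI)
  note u = perm_atLeastLessThan_props[OF assms]
  note w = perm_atLeastAtMost_props[OF ranks_perm[OF assms]]
  show "length (positions_by_value N (ranks N u)) = length u"
    using u by (simp add: positions_by_value_def)
  fix k
  assume "k < length (positions_by_value N (ranks N u))"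
  then have k: "k < N"
    by (simp add: positions_by_value_def)
  then have uk: "u!k < N"
    using u nth_mem by fastforce
  have "ranks N u ! (u!k) = Suc k"
    using uk index_of_nth[OF u(1)] u k by (simp add: ranks_def)
  then have "index_of (ranks N u) (Suc k) = u!k"
    using index_of_nth[OF w(1), of "u!k"] w uk by simp
  then show "positions_by_value N (ranks N u) ! k = u ! k"
    using k by (simp add: positions_by_value_def)
qed

lemma ranks_positions_by_value:
  assumes "v \<in> permutations_of_set {1..N}"
  shows "ranks N (positions_by_value N v) = v"
proof (rule nth_equalityI)
  note v = perm_atLeastAtMost_props[OF assms]
  note w = perm_atLeastLessThan_props[OF positions_by_value_perm[OF assms]]
  show "length (ranks N (positions_by_value N v)) = length v"
    using v by (simp add: ranks_def)
  fix p
  assume "p < length (ranks N (positions_by_value N v))"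
  then have p: "p < N"
    by (simp add: ranks_def)
  then have vp: "v!p \<in> {1..N}"
    using v nth_mem by fastforce
  then have k: "v!p - 1 < N"
    by auto
  have "positions_by_value N v ! (v!p - 1) = p"
    using k index_of_nth[OF v(1)] v p vp by (simp add: positions_by_value_def)
  then have "index_of (positions_by_value N v) p = v!p - 1"
    using index_of_nth[OF w(1), of "v!p - 1"] w k by simp
  then show "ranks N (positions_by_value N v) ! p = v ! p"
    using p vp by (simp add: ranks_def)
qed

definition respects_order :: "('a \<times> 'a) set \<Rightarrow> 'a list \<Rightarrow> bool" where
  "respects_order R u \<longleftrightarrow> (\<forall>a b. a < length u \<longrightarrow> b < length u \<longrightarrow> (u!a, u!b) \<in> R \<longrightarrow> a < b)"

definition increasing_on :: "(nat \<times> nat) set \<Rightarrow> nat \<Rightarrow> nat list \<Rightarrow> bool" where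
  "increasing_on R N v \<longleftrightarrow> (\<forall>p q. (p, q) \<in> R \<longrightarrow> p < N \<longrightarrow> q < N \<longrightarrow> v!p < v!q)"

lemma increasing_on_ranks_iff:
  assumes "u \<in> permutations_of_set {0..<N}"
  shows "increasing_on R N (ranks N u) \<longleftrightarrow> respects_order R u"
proof -
  note u = perm_atLeastLessThan_props[OF assms]
  have pos: "p < N \<Longrightarrow> index_of u p < N \<and> u!(index_of u p) = p" for p
    using index_of_mem[OF u(1)] u by auto
  have u_less: "a < N \<Longrightarrow> u!a < N" for a
    using u nth_mem by fastforce
  have ranks_less: "ranks N u ! p < ranks N u ! q \<longleftrightarrow> index_of u p < index_of u q"
    if "p < N" "q < N" for p q
    using that by (simp add: ranks_def)
  show ?thesis
  proof
    assume inc: "increasing_on R N (ranks N u)"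
    show "respects_order R u"
      unfolding respects_order_def
    proof (intro allI impI)
      fix a b
      assume ab: "a < length u" "b < length u" "(u!a, u!b) \<in> R"
      then have "ranks N u ! (u!a) < ranks N u ! (u!b)"
        using inc u_less u by (auto simp: increasing_on_def)
      then show "a < b"
        using ranks_less u_less ab u index_of_nth[OF u(1)] by simp
    qed
  next
    assume resp: "respects_order R u"
    show "increasing_on R N (ranks N u)"
      unfolding increasing_on_def
    proof (intro allI impI)
      fix p q
      assume pq: "(p, q) \<in> R" "p < N" "q < N"
      then have "index_of u p < index_of u q"
        using resp pos u by (auto simp: respects_order_def)
      then show "ranks N u ! p < ranks N u ! q"
        using ranks_less pq(2,3) by simp
    qed
  qed
qed

lemma card_increasing_on:
  "card {v \<in> permutations_of_set {1..N}. increasing_on R N v}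
     = card {u \<in> permutations_of_set {0..<N}. respects_order R u}"
proof -
  have "bij_betw (ranks N) {u \<in> permutations_of_set {0..<N}. respects_order R u}
      {v \<in> permutations_of_set {1..N}. increasing_on R N v}"
  proof (rule bij_betw_byWitness[where f' = "positions_by_value N"])
    show "\<forall>u\<in>{u \<in> permutations_of_set {0..<N}. respects_order R u}. positions_by_value N (ranks N u) = u"
      using positions_by_value_ranks by simp
    show "\<forall>v\<in>{v \<in> permutations_of_set {1..N}. increasing_on R N v}. ranks N (positions_by_value N v) = v"
      using ranks_positions_by_value by simp
    show "ranks N ` {u \<in> permutations_of_set {0..<N}. respects_order R u}
        \<subseteq> {v \<in> permutations_of_set {1..N}. increasing_on R N v}"
      using ranks_perm increasing_on_ranks_iff by auto
    show "positions_by_value N ` {v \<in> permutations_of_set {1..N}. increasing_on R N v}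
        \<subseteq> {u \<in> permutations_of_set {0..<N}. respects_order R u}"
      using positions_by_value_perm increasing_on_ranks_iff ranks_positions_by_value by fastforce
  qed
  then show ?thesis
    by (simp add: bij_betw_same_card)
qed

lemma respects_order_Cons:
  assumes "irrefl R" "x \<notin> set u"
  shows "respects_order R (x # u) \<longleftrightarrow> respects_order R u \<and> (\<forall>q\<in>set u. (q, x) \<notin> R)"
proof
  assume h: "respects_order R (x # u)"
  have "respects_order R u"
    unfolding respects_order_def
  proof (intro allI impI)
    fix a b
    assume "a < length u" "b < length u" "(u!a, u!b) \<in> R"
    then have "Suc a < Suc b"
      using h unfolding respects_order_def by (metis length_Cons nth_Cons_Suc Suc_less_eq)
    then show "a < b"
      by simp
  qed
  moreover have "(q, x) \<notin> R" if q: "q \<in> set u" for q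
  proof
    assume "(q, x) \<in> R"
    moreover obtain a where "a < length u" "u!a = q"
      using q by (auto simp: in_set_conv_nth)
    ultimately have "Suc a < 0"
      using h unfolding respects_order_def by (metis length_Cons nth_Cons_0 nth_Cons_Suc Suc_less_eq zero_less_Suc)
    then show False
      by simp
  qed
  ultimately show "respects_order R u \<and> (\<forall>q\<in>set u. (q, x) \<notin> R)"
    by blast
next
  assume h: "respects_order R u \<and> (\<forall>q\<in>set u. (q, x) \<notin> R)"
  show "respects_order R (x # u)"
    unfolding respects_order_def
  proof (intro allI impI)
    fix a b
    assume ab: "a < length (x # u)" "b < length (x # u)" "((x # u)!a, (x # u)!b) \<in> R"
    show "a < b"
    proof (cases b)
      case 0
      then have "((x # u)!a, x) \<in> R"
        using ab by simp
      moreover have "(x # u)!a \<in> set u \<or> (x # u)!a = x"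
        using ab(1) by (cases a) auto
      ultimately show ?thesis
        using h assms(1) by (auto simp: irrefl_def)
    next
      case (Suc b')
      then show ?thesis
        using h ab by (cases a) (auto simp: respects_order_def)
    qed
  qed
qed

lemma card_respects_order_rec:
  assumes "irrefl R" "finite S" "S \<noteq> {}"
  shows "card {u \<in> permutations_of_set S. respects_order R u} =
    (\<Sum>x | x \<in> S \<and> (\<forall>q\<in>S. (q, x) \<notin> R). card {u \<in> permutations_of_set (S - {x}). respects_order R u})"
proof -
  define M where "M = {x. x \<in> S \<and> (\<forall>q\<in>S. (q, x) \<notin> R)}"
  define P where "P x = {u \<in> permutations_of_set (S - {x}). respects_order R u}" for x
  have split: "{u \<in> permutations_of_set S. respects_order R u} = (\<Union>x\<in>M. (#) x ` P x)"
  proof (rule set_eqI, rule iffI)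
    fix u
    assume "u \<in> {u \<in> permutations_of_set S. respects_order R u}"
    then obtain x u' where xu: "x \<in> S" "u' \<in> permutations_of_set (S - {x})" "u = x # u'"
      "respects_order R u"
      using permutations_of_set_nonempty[OF assms(3)] by auto
    have su: "set u' = S - {x}"
      using xu(2) by (simp add: permutations_of_set_def)
    then have "respects_order R u'" "\<forall>q\<in>set u'. (q, x) \<notin> R"
      using respects_order_Cons[OF assms(1)] xu(3,4) by auto
    moreover have "(x, x) \<notin> R"
      using assms(1) by (simp add: irrefl_def)
    ultimately have "x \<in> M"
      using xu(1) su by (auto simp: M_def)
    then show "u \<in> (\<Union>x\<in>M. (#) x ` P x)"
      using xu \<open>respects_order R u'\<close> by (auto simp: P_def)
  next
    fix u
    assume "u \<in> (\<Union>x\<in>M. (#) x ` P x)"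
    then obtain x u' where xu: "x \<in> M" "u' \<in> permutations_of_set (S - {x})"
      "respects_order R u'" "u = x # u'"
      by (auto simp: P_def)
    have "set u' = S - {x}"
      using xu(2) by (simp add: permutations_of_set_def)
    then have "respects_order R u"
      using respects_order_Cons[OF assms(1), of x u'] xu by (auto simp: M_def)
    moreover have "u \<in> permutations_of_set S"
      using xu(1,2,4) permutations_of_set_nonempty[OF assms(3)] by (auto simp: M_def)
    ultimately show "u \<in> {u \<in> permutations_of_set S. respects_order R u}"
      by simp
  qed
  have "finite M"
    using assms(2) by (simp add: M_def)
  then have "card {u \<in> permutations_of_set S. respects_order R u} = (\<Sum>x\<in>M. card ((#) x ` P x))"
    unfolding split using assms(2) by (intro card_UN_disjoint) (auto simp: P_def)
  also have "\<dots> = (\<Sum>x\<in>M. card (P x))"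
    by (simp add: card_image)
  finally show ?thesis
    by (simp add: M_def P_def)
qed

text \<open>Each occurrence at \<open>3 i\<close> forces \<open>v!(3i) < v!(3i+3) < v!(3i+1) < v!(3i+2) < v!(3i+4)\<close>;
  these covering pairs, over all \<open>i\<close>, form a zigzag poset on the positions.\<close>

definition zigzag :: "(nat \<times> nat) set" where
  "zigzag = {(p, q). \<exists>i. (p = 3*i \<and> q = 3*i+3) \<or> (p = 3*i+3 \<and> q = 3*i+1) \<or>
     (p = 3*i+1 \<and> q = 3*i+2) \<or> (p = 3*i+2 \<and> q = 3*i+4)}"

lemma irrefl_zigzag: "irrefl zigzag"
  by (auto simp: zigzag_def irrefl_def)

lemma run_perms_eq_increasing_on:
  "run_perms j = {v \<in> permutations_of_set {1..3*j+2}. increasing_on zigzag (3*j+2) v}"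
proof -
  have "(\<forall>i<j. occ_at v (3*i)) \<longleftrightarrow> increasing_on zigzag (3*j+2) v" if "length v = 3*j+2" for v
  proof
    assume run: "\<forall>i<j. occ_at v (3*i)"
    show "increasing_on zigzag (3*j+2) v"
      unfolding increasing_on_def
    proof (intro allI impI)
      fix p q
      assume pq: "(p, q) \<in> zigzag" "p < 3*j+2" "q < 3*j+2"
      then obtain i where i: "(p = 3*i \<and> q = 3*i+3) \<or> (p = 3*i+3 \<and> q = 3*i+1) \<or>
          (p = 3*i+1 \<and> q = 3*i+2) \<or> (p = 3*i+2 \<and> q = 3*i+4)"
        by (auto simp: zigzag_def)
      then have "occ_at v (3*i)"
        using pq run by auto
      with i show "v!p < v!q"
        unfolding occ_at_iff by (auto simp: add.assoc)
    qed
  next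
    assume inc: "increasing_on zigzag (3*j+2) v"
    show "\<forall>i<j. occ_at v (3*i)"
    proof (intro allI impI)
      fix i
      assume "i < j"
      moreover have "(3*i, 3*i+3) \<in> zigzag" "(3*i+3, 3*i+1) \<in> zigzag"
        "(3*i+1, 3*i+2) \<in> zigzag" "(3*i+2, 3*i+4) \<in> zigzag"
        by (auto simp: zigzag_def)
      ultimately show "occ_at v (3*i)"
        using inc that unfolding occ_at_iff increasing_on_def by auto
    qed
  qed
  then show ?thesis
    unfolding run_perms_def using length_perm by blast
qed

lemma zigzag_pred_mult3: "(q, 3*i) \<in> zigzag \<longleftrightarrow> 1 \<le> i \<and> q = 3*i - 3"
  unfolding zigzag_def by auto presburger+

lemma zigzag_pred_mod1: "(q, 3*m+1) \<in> zigzag \<longleftrightarrow> q = 3*m+3 \<or> (1 \<le> m \<and> q = 3*m - 1)"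
  unfolding zigzag_def by auto presburger+

lemma zigzag_pred_mod2: "(q, 3*m+2) \<in> zigzag \<longleftrightarrow> q = 3*m+1"
  unfolding zigzag_def by auto presburger+

text \<open>\<open>off_mult3\<close> enumerates the positions \<open>1, 2, 4, 5, 7, 8, \<dots>\<close> not divisible by \<open>3\<close>.
  Removing minimal elements of the zigzag poset one at a time always leaves a set of the
  form \<open>remaining j a b\<close>: the multiples \<open>3a, \<dots>, 3j\<close> and the positions \<open>off_mult3 b, \<dots>,
  off_mult3 (2j)\<close>.\<close>

definition off_mult3 :: "nat \<Rightarrow> nat" where
  "off_mult3 l = 3*(l div 2) + l mod 2 + 1"

definition remaining :: "nat \<Rightarrow> nat \<Rightarrow> nat \<Rightarrow> nat set" where
  "remaining j a b = (\<lambda>i. 3*i) ` {a..j} \<union> off_mult3 ` {b..2*j}"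

lemma off_mult3_even: "off_mult3 (2*m) = 3*m+1"
  by (simp add: off_mult3_def)

lemma off_mult3_odd: "off_mult3 (Suc (2*m)) = 3*m+2"
  by (simp add: off_mult3_def)

lemma off_mult3_mod3: "off_mult3 l mod 3 = l mod 2 + 1"
proof -
  have "l mod 2 + 1 < 3"
    by simp
  then show ?thesis
    unfolding off_mult3_def by (simp add: add.assoc)
qed

lemma off_mult3_neq_mult3: "off_mult3 l \<noteq> 3*i"
  using off_mult3_mod3[of l] by auto

lemma off_mult3_eq_iff: "off_mult3 l = off_mult3 l' \<longleftrightarrow> l = l'"
proof
  assume eq: "off_mult3 l = off_mult3 l'"
  then have "l mod 2 = l' mod 2"
    using off_mult3_mod3[of l] off_mult3_mod3[of l'] by simp
  moreover from this eq have "l div 2 = l' div 2"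
    by (simp add: off_mult3_def)
  ultimately show "l = l'"
    by (metis div_mult_mod_eq)
qed simp

lemma mult3_neq_off_mult3: "3*i \<noteq> off_mult3 l"
  using off_mult3_neq_mult3 by metis

lemma mult3_mem_remaining: "3*i \<in> remaining j a b \<longleftrightarrow> a \<le> i \<and> i \<le> j"
  unfolding remaining_def using mult3_neq_off_mult3 by auto

lemma off_mult3_mem_remaining: "off_mult3 l \<in> remaining j a b \<longleftrightarrow> b \<le> l \<and> l \<le> 2*j"
  unfolding remaining_def using off_mult3_neq_mult3 off_mult3_eq_iff by (auto simp: image_iff)

lemma finite_remaining: "finite (remaining j a b)"
  by (simp add: remaining_def)

lemma remaining_remove_mult3: "a \<le> j \<Longrightarrow> remaining j a b - {3*a} = remaining j (Suc a) b"
  unfolding remaining_def using mult3_neq_off_mult3 by (auto simp: image_iff)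

lemma remaining_remove_off_mult3: "b \<le> 2*j \<Longrightarrow> remaining j a b - {off_mult3 b} = remaining j a (Suc b)"
  unfolding remaining_def using off_mult3_neq_mult3 off_mult3_eq_iff by (auto simp: image_iff)

lemma remaining_empty: "remaining j (Suc j) (Suc (2*j)) = {}"
  by (simp add: remaining_def)

lemma remaining_all: "remaining j 0 0 = {0..<3*j+2}"
proof (rule set_eqI, rule iffI)
  fix x
  assume "x \<in> remaining j 0 0"
  then consider i where "x = 3*i" "i \<le> j" | l where "x = off_mult3 l" "l \<le> 2*j"
    by (auto simp: remaining_def)
  then show "x \<in> {0..<3*j+2}"
  proof cases
    case 1
    then show ?thesis
      by simp
  next
    case (2 l)
    define m where "m = l div 2"
    have "l = 2*m \<or> l = Suc (2*m)"
      unfolding m_def by presburger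
    then have "x < 3*j+2"
      using 2 by (auto simp: off_mult3_even off_mult3_odd)
    then show ?thesis
      by simp
  qed
next
  fix x
  assume "x \<in> {0..<3*j+2}"
  then have x: "x < 3*j+2"
    by simp
  have "x mod 3 = 0 \<or> x mod 3 = 1 \<or> x mod 3 = 2"
    by arith
  then show "x \<in> remaining j 0 0"
  proof (elim disjE)
    assume "x mod 3 = 0"
    then have "x = 3*(x div 3)" "x div 3 \<le> j"
      using x by presburger+
    then show ?thesis
      using mult3_mem_remaining[of "x div 3" j 0 0] by simp
  next
    assume "x mod 3 = 1"
    then have "x = 3*(x div 3) + 1" "x div 3 \<le> j"
      using x by presburger+
    then show ?thesis
      using off_mult3_mem_remaining[of "2*(x div 3)" j 0 0] by (simp add: off_mult3_even)
  next
    assume "x mod 3 = 2"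
    then have "x = 3*(x div 3) + 2" "x div 3 < j"
      using x by presburger+
    then show ?thesis
      using off_mult3_mem_remaining[of "Suc (2*(x div 3))" j 0 0] by (simp add: off_mult3_odd)
  qed
qed

lemma minimal_in_remaining_iff:
  assumes x: "x \<in> remaining j a b"
  shows "(\<forall>q\<in>remaining j a b. (q, x) \<notin> zigzag) \<longleftrightarrow>
    x = 3*a \<or> (x = off_mult3 b \<and> (odd b \<or> b = 2*j \<or> b + 2 < 2*a))"
proof -
  let ?U = "remaining j a b"
  from x consider (mult3) i where "x = 3*i" "a \<le> i" "i \<le> j"
    | (off) l where "x = off_mult3 l" "b \<le> l" "l \<le> 2*j"
    by (auto simp: remaining_def)
  then show ?thesis
  proof cases
    case (mult3 i)
    have "(q, x) \<in> zigzag \<longleftrightarrow> 1 \<le> i \<and> q = 3*(i-1)" for q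
      using zigzag_pred_mult3[of q i] mult3(1) by (simp add: diff_mult_distrib2)
    then have "(\<forall>q\<in>?U. (q, x) \<notin> zigzag) \<longleftrightarrow> \<not> (1 \<le> i \<and> 3*(i-1) \<in> ?U)"
      by auto
    also have "\<dots> \<longleftrightarrow> i = a"
      using mult3_mem_remaining[of "i-1" j a b] mult3 by auto
    finally show ?thesis
      using mult3 mult3_neq_off_mult3 by auto
  next
    case (off l)
    have x_ne: "x \<noteq> 3*a" and x_eq: "x = off_mult3 b \<longleftrightarrow> b = l"
      using off off_mult3_neq_mult3 off_mult3_eq_iff by auto
    define m where "m = l div 2"
    have "l = 2*m \<or> l = Suc (2*m)"
      unfolding m_def by presburger
    then consider (even) "l = 2*m" | (odd) "l = Suc (2*m)"
      by blast
    then show ?thesis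
    proof cases
      case even
      have "x = 3*m+1"
        using off(1) even by (simp add: off_mult3_even)
      then have "(q, x) \<in> zigzag \<longleftrightarrow> q = 3*(m+1) \<or> (1 \<le> m \<and> q = off_mult3 (Suc (2*(m-1))))" for q
        using zigzag_pred_mod1[of q m] by (cases m) (simp_all add: off_mult3_odd)
      then have "(\<forall>q\<in>?U. (q, x) \<notin> zigzag) \<longleftrightarrow>
          3*(m+1) \<notin> ?U \<and> \<not> (1 \<le> m \<and> off_mult3 (Suc (2*(m-1))) \<in> ?U)"
        by auto
      also have "\<dots> \<longleftrightarrow> \<not> (a \<le> m+1 \<and> m+1 \<le> j) \<and> \<not> (1 \<le> m \<and> b \<le> Suc (2*(m-1)))"
        using off even mult3_mem_remaining[of "m+1" j a b] by (auto simp: off_mult3_mem_remaining)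
      finally show ?thesis
        using x_ne x_eq off even by auto
    next
      case odd
      have "x = 3*m+2"
        using off(1) odd by (simp add: off_mult3_odd)
      then have "(q, x) \<in> zigzag \<longleftrightarrow> q = off_mult3 (2*m)" for q
        using zigzag_pred_mod2[of q m] by (simp add: off_mult3_even)
      then have "(\<forall>q\<in>?U. (q, x) \<notin> zigzag) \<longleftrightarrow> off_mult3 (2*m) \<notin> ?U"
        by auto
      also have "\<dots> \<longleftrightarrow> \<not> b \<le> 2*m"
        using off odd by (simp add: off_mult3_mem_remaining)
      finally show ?thesis
        using x_ne x_eq off odd by auto
    qed
  qed
qed

definition count_ext :: "nat \<Rightarrow> nat \<Rightarrow> nat \<Rightarrow> nat" where
  "count_ext j a b = card {u \<in> permutations_of_set (remaining j a b). respects_order zigzag u}"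

lemma count_ext_step:
  assumes "a \<le> j \<or> b \<le> 2*j"
  shows "count_ext j a b = (if a \<le> j then count_ext j (Suc a) b else 0) +
     (if b \<le> 2*j \<and> (odd b \<or> b = 2*j \<or> b + 2 < 2*a) then count_ext j a (Suc b) else 0)"
proof -
  let ?U = "remaining j a b"
  let ?c = "\<lambda>x. card {u \<in> permutations_of_set (?U - {x}). respects_order zigzag u}"
  define A where "A = (if a \<le> j then {3*a} else {})"
  define B where "B = (if b \<le> 2*j \<and> (odd b \<or> b = 2*j \<or> b + 2 < 2*a) then {off_mult3 b} else {})"
  have "?U \<noteq> {}"
    using assms mult3_mem_remaining off_mult3_mem_remaining by blast
  moreover have "{x. x \<in> ?U \<and> (\<forall>q\<in>?U. (q, x) \<notin> zigzag)} = A \<union> B"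
  proof (rule set_eqI, rule iffI)
    fix x
    assume "x \<in> {x. x \<in> ?U \<and> (\<forall>q\<in>?U. (q, x) \<notin> zigzag)}"
    then show "x \<in> A \<union> B"
      using minimal_in_remaining_iff[of x j a b] mult3_mem_remaining off_mult3_mem_remaining
      by (auto simp: A_def B_def)
  next
    fix x
    assume "x \<in> A \<union> B"
    moreover from this have "x \<in> ?U"
      using mult3_mem_remaining off_mult3_mem_remaining by (auto simp: A_def B_def split: if_splits)
    ultimately show "x \<in> {x. x \<in> ?U \<and> (\<forall>q\<in>?U. (q, x) \<notin> zigzag)}"
      using minimal_in_remaining_iff by (auto simp: A_def B_def split: if_splits)
  qed
  ultimately have "count_ext j a b = (\<Sum>x\<in>A \<union> B. ?c x)"
    unfolding count_ext_def using card_respects_order_rec[OF irrefl_zigzag finite_remaining] by simp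
  also have "\<dots> = (\<Sum>x\<in>A. ?c x) + (\<Sum>x\<in>B. ?c x)"
    using mult3_neq_off_mult3 off_mult3_neq_mult3 by (intro sum.union_disjoint) (auto simp: A_def B_def)
  also have "(\<Sum>x\<in>A. ?c x) = (if a \<le> j then count_ext j (Suc a) b else 0)"
    by (simp add: A_def count_ext_def remaining_remove_mult3)
  also have "(\<Sum>x\<in>B. ?c x) =
      (if b \<le> 2*j \<and> (odd b \<or> b = 2*j \<or> b + 2 < 2*a) then count_ext j a (Suc b) else 0)"
  proof (cases "b \<le> 2*j \<and> (odd b \<or> b = 2*j \<or> b + 2 < 2*a)")
    case True
    then show ?thesis
      by (simp add: B_def count_ext_def remaining_remove_off_mult3)
  next
    case False
    then have "B = {}"
      by (simp add: B_def)
    then show ?thesis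
      by (simp only: sum.empty if_not_P[OF False])
  qed
  finally show ?thesis .
qed

lemma count_ext_empty: "count_ext j (Suc j) (Suc (2*j)) = 1"
proof -
  have "{u \<in> permutations_of_set {}. respects_order zigzag u} = {[]}"
    by (auto simp: respects_order_def)
  then show ?thesis
    by (simp add: count_ext_def remaining_empty)
qed

text \<open>The recursion of \<open>count_ext_step\<close> is that of \<open>walk_count\<close>: the height of
  the walk is \<open>2a - b - 1\<close>, and removing \<open>3a\<close> (resp. \<open>off_mult3 b\<close>) is a step \<open>+2\<close>
  (resp. \<open>-1\<close>).\<close>

lemma count_ext_eq_walk_count:
  assumes "1 \<le> a" "a \<le> Suc j" "b \<le> Suc (2*j)" "b + 2 \<le> 2*a"
  shows "count_ext j a b = walk_count (2*a - b - 1) ((Suc j - a) + (Suc (2*j) - b))"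
  using assms
proof (induction "(Suc j - a) + (Suc (2*j) - b)" arbitrary: a b)
  case (Suc n)
  define h where "h = 2*a - b - 2"
  have height: "2*a - b - 1 = Suc h"
    using Suc.prems by (simp add: h_def)
  have up: "(if a \<le> j then count_ext j (Suc a) b else 0) = walk_count (h + 3) n"
  proof (cases "a \<le> j")
    case True
    have "count_ext j (Suc a) b = walk_count (2 * Suc a - b - 1) ((Suc j - Suc a) + (Suc (2*j) - b))"
      using Suc.prems Suc.hyps(2) True by (intro Suc.hyps(1)) auto
    moreover have "2 * Suc a - b - 1 = h + 3" "(Suc j - Suc a) + (Suc (2*j) - b) = n"
      using Suc.prems Suc.hyps(2) True by (simp_all add: h_def)
    ultimately have "count_ext j (Suc a) b = walk_count (h + 3) n"
      by metis
    then show ?thesis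
      using True by simp
  next
    case False
    then have "a = Suc j"
      using Suc.prems by simp
    then have "n < h + 3"
      using Suc.hyps(2) Suc.prems by (simp add: h_def)
    then show ?thesis
      using False walk_count_nonzero_imp_le by (metis not_le)
  qed
  have down: "(if b \<le> 2*j \<and> (odd b \<or> b = 2*j \<or> b + 2 < 2*a) then count_ext j a (Suc b) else 0)
      = walk_count h n"
  proof (cases "b \<le> 2*j \<and> (odd b \<or> b = 2*j \<or> b + 2 < 2*a)")
    case True
    show ?thesis
    proof (cases "h = 0")
      case False
      have "count_ext j a (Suc b) = walk_count (2*a - Suc b - 1) ((Suc j - a) + (Suc (2*j) - Suc b))"
        using Suc.prems Suc.hyps(2) True False by (intro Suc.hyps(1)) (auto simp: h_def)
      moreover have "2*a - Suc b - 1 = h" "(Suc j - a) + (Suc (2*j) - Suc b) = n"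
        using Suc.hyps(2) True by (simp_all add: h_def)
      ultimately have "count_ext j a (Suc b) = walk_count h n"
        by metis
      then show ?thesis
        using True by simp
    next
      case h0: True
      then have "b + 2 = 2*a"
        using Suc.prems by (simp add: h_def)
      then have "b = 2*j" "a = Suc j"
        using True by presburger+
      then have "n = 0"
        using Suc.hyps(2) by simp
      then show ?thesis
        using True h0 count_ext_empty \<open>b = 2*j\<close> \<open>a = Suc j\<close> by simp
    qed
  next
    case False
    then have "b + 2 = 2*a" "b \<noteq> 2*j" "b \<le> 2*j"
      using Suc.prems by auto
    then have "h = 0" "n \<noteq> 0"
      using Suc.hyps(2) by (auto simp: h_def)
    then have "walk_count h n = 0"
      by (cases n) auto
    then show ?thesis
      by (subst if_not_P[OF False]) simp
  qed
  have "a \<le> j \<or> b \<le> 2*j"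
    using Suc.prems by auto
  then show ?case
    using count_ext_step up down height Suc.hyps(2)[symmetric] by simp
qed simp

lemma card_run_perms:
  assumes "1 \<le> j"
  shows "card (run_perms j) = walk_count 1 (3*j+1)"
proof -
  have "card (run_perms j) = card {u \<in> permutations_of_set {0..<3*j+2}. respects_order zigzag u}"
    unfolding run_perms_eq_increasing_on card_increasing_on ..
  also have "\<dots> = count_ext j 0 0"
    by (simp add: count_ext_def remaining_all)
  also have "\<dots> = count_ext j 1 0"
    using count_ext_step[of 0 j 0] assms by simp
  also have "\<dots> = walk_count 1 (3*j+1)"
    using count_ext_eq_walk_count[of 1 j 0] assms by simp
  finally show ?thesis .
qed

section \<open>The cluster generating function\<close>

lemma s_num_eq_0:
  assumes "m < k"
  shows "s_num m k = 0"
proof (cases "m < 5")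
  case False
  have "\<not> is_cluster k w" if "w \<in> permutations_of_set {1..m}" for w
  proof
    assume "is_cluster k w"
    then have "card (occs w) = k"
      by (simp add: is_cluster_def)
    moreover have "occs w \<subseteq> {..<m}"
      using occs_imp_length length_perm[OF that] by fastforce
    then have "card (occs w) \<le> m"
      using card_mono[of "{..<m}"] by fastforce
    ultimately show False
      using assms by simp
  qed
  then show ?thesis
    using False by (simp add: s_num_def pat_len_eq)
qed (use assms in \<open>simp add: s_num_def pat_len_eq\<close>)

lemma t_num_extend:
  assumes "m \<le> N"
  shows "(\<Sum>k\<le>N. (-1) ^ k * int (s_num m k)) = t_num m"
  unfolding t_num_def using assms s_num_eq_0 by (intro sum.mono_neutral_right) auto

lemma t_num_small: "t_num 0 = 0" "t_num 1 = 1" "t_num 2 = 0" "t_num 3 = 0" "t_num 4 = 0"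
  by (simp_all add: t_num_def s_num_def pat_len_eq numeral_eq_Suc)

lemma sum_atMost_if_le:
  fixes g :: "nat \<Rightarrow> 'a::comm_monoid_add"
  assumes "j \<le> n"
  shows "(\<Sum>k\<le>n. if j \<le> k then g k else 0) = (\<Sum>k\<le>n-j. g (k + j))"
proof -
  have "{..n} \<inter> {k. j \<le> k} = {j..n}"
    by auto
  then have "(\<Sum>k\<le>n. if j \<le> k then g k else 0) = (\<Sum>k\<in>{j..n}. g k)"
    by (simp add: sum.If_cases)
  also have "\<dots> = (\<Sum>k\<in>{0..n-j}. g (k + j))"
    using sum.shift_bounds_cl_nat_ivl[of g 0 j "n - j"] assms by simp
  finally show ?thesis
    by (simp add: atMost_atLeast0)
qed

text \<open>The cluster recursion, weighted by \<open>(-1)\<^sup>k\<close>: the initial run contributes \<open>(-1)\<^sup>j\<close>.\<close>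

lemma t_num_rec:
  assumes "5 \<le> n"
  shows "t_num n =
    (\<Sum>j | 1 \<le> j \<and> 3*j+2 \<le> n. (-1) ^ j * int (walk_count 1 (3*j+1)) * t_num (n - (3*j+1)))"
proof -
  define J where "J = {j. 1 \<le> j \<and> 3*j+2 \<le> n}"
  define c where "c j k = int (card (run_perms j) * s_num (n - (3*j+1)) k)" for j k
  have "finite J"
    by (rule finite_subset[of _ "{..n}"]) (auto simp: J_def)
  have "(-1) ^ k * int (s_num n k) = (\<Sum>j\<in>J. if j \<le> k then (-1) ^ k * c j (k - j) else 0)" for k
  proof -
    have "s_num n k = (\<Sum>j | j \<in> J \<and> j \<le> k. card (run_perms j) * s_num (n - (3*j+1)) (k - j))"
      using s_num_rec[OF assms, of k] by (simp add: J_def conj_assoc)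
    also have "\<dots> = (\<Sum>j\<in>J. if j \<le> k then card (run_perms j) * s_num (n - (3*j+1)) (k - j) else 0)"
      by (subst sum.inter_filter[OF \<open>finite J\<close>]) (rule refl)
    finally have "int (s_num n k)
        = (\<Sum>j\<in>J. int (if j \<le> k then card (run_perms j) * s_num (n - (3*j+1)) (k - j) else 0))"
      by (simp only: of_nat_sum)
    also have "\<dots> = (\<Sum>j\<in>J. if j \<le> k then c j (k - j) else 0)"
      by (rule sum.cong) (auto simp: c_def)
    finally show ?thesis
      by (simp add: sum_distrib_left if_distrib cong: if_cong)
  qed
  then have "t_num n = (\<Sum>k\<le>n. \<Sum>j\<in>J. if j \<le> k then (-1) ^ k * c j (k - j) else 0)"
    by (simp add: t_num_def)
  also have "\<dots> = (\<Sum>j\<in>J. \<Sum>k\<le>n. if j \<le> k then (-1) ^ k * c j (k - j) else 0)"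
    by (rule sum.swap)
  also have "\<dots> = (\<Sum>j\<in>J. (-1) ^ j * int (walk_count 1 (3*j+1)) * t_num (n - (3*j+1)))"
  proof (rule sum.cong[OF refl])
    fix j
    assume "j \<in> J"
    then have j: "j \<le> n" "1 \<le> j" "n - (3*j+1) \<le> n - j"
      by (auto simp: J_def)
    have "(\<Sum>k\<le>n. if j \<le> k then (-1) ^ k * c j (k - j) else 0)
        = (\<Sum>k\<le>n-j. (-1) ^ (k + j) * c j k)"
      using sum_atMost_if_le[OF j(1), of "\<lambda>k. (-1) ^ k * c j (k - j)"] by simp
    also have "\<dots> = (-1) ^ j * int (card (run_perms j)) * (\<Sum>k\<le>n-j. (-1) ^ k * int (s_num (n - (3*j+1)) k))"
      by (simp add: c_def sum_distrib_left power_add algebra_simps)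
    also have "\<dots> = (-1) ^ j * int (walk_count 1 (3*j+1)) * t_num (n - (3*j+1))"
      using t_num_extend[OF j(3)] card_run_perms[OF j(2)] by simp
    finally show "(\<Sum>k\<le>n. if j \<le> k then (-1) ^ k * c j (k - j) else 0)
        = (-1) ^ j * int (walk_count 1 (3*j+1)) * t_num (n - (3*j+1))" .
  qed
  finally show ?thesis
    by (simp add: J_def)
qed

lemma fps_nth_cluster_T_minus_1: "fps_nth (cluster_T - 1) n = (if n = 0 then 0 else real_of_int (t_num n))"
  by (simp add: cluster_T_def)

lemma fps_nth_F_fps_minus_X:
  "fps_nth (F_fps - fps_X) i = (if i = 1 then 0 else (-1) ^ (i+1) * real (walk_count 1 i))"
  using F_fps_initial_coeffs(2) by (simp add: fps_nth_F_fps)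

lemma fps_nth_F_fps_minus_X_times_cluster:
  assumes "1 \<le> n"
  shows "fps_nth ((F_fps - fps_X) * (cluster_T - 1)) n =
    (\<Sum>j | 1 \<le> j \<and> 3*j+2 \<le> n. (-1) ^ j * real (walk_count 1 (3*j+1)) * real_of_int (t_num (n - (3*j+1))))"
proof -
  define J where "J = {j. 1 \<le> j \<and> 3*j+2 \<le> n}"
  define f where "f i = fps_nth (F_fps - fps_X) i * fps_nth (cluster_T - 1) (n - i)" for i
  have vanish: "f i = 0" if "i \<in> {0..n} - (\<lambda>j. 3*j+1) ` J" for i
  proof (rule ccontr)
    assume "f i \<noteq> 0"
    then have "fps_nth (F_fps - fps_X) i \<noteq> 0" "fps_nth (cluster_T - 1) (n - i) \<noteq> 0"
      unfolding f_def by (auto simp del: fps_sub_nth)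
    then have "i \<noteq> 1" "walk_count 1 i \<noteq> 0" "i < n"
      unfolding fps_nth_F_fps_minus_X fps_nth_cluster_T_minus_1 by (auto split: if_splits)
    then have "i = 3*(i div 3) + 1" "1 \<le> i div 3"
      using walk_count_nonzero_imp_mod[of 1 i] by presburger+
    then have "i \<in> (\<lambda>j. 3*j+1) ` J"
      using \<open>i < n\<close> by (auto simp: J_def intro!: image_eqI[of _ _ "i div 3"])
    then show False
      using that by simp
  qed
  have "fps_nth ((F_fps - fps_X) * (cluster_T - 1)) n = (\<Sum>i=0..n. f i)"
    by (simp add: fps_mult_nth f_def)
  also have "\<dots> = (\<Sum>i\<in>(\<lambda>j. 3*j+1) ` J. f i)"
    using vanish by (intro sum.mono_neutral_right) (auto simp: J_def)
  also have "\<dots> = (\<Sum>j\<in>J. f (3*j+1))"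
    by (rule sum.reindex_cong[where l = "\<lambda>j. 3*j+1"]) (auto simp: inj_on_def)
  also have "\<dots> = (\<Sum>j\<in>J. (-1) ^ j * real (walk_count 1 (3*j+1)) * real_of_int (t_num (n - (3*j+1))))"
  proof (rule sum.cong[OF refl])
    fix j
    assume "j \<in> J"
    then have "n - (3*j+1) \<noteq> 0" "3*j+1 \<noteq> 1"
      by (auto simp: J_def)
    moreover have "(-1::real) ^ (3*j+1+1) = (-1) ^ j"
      by (simp add: power_add power_mult)
    ultimately show "f (3*j+1) = (-1) ^ j * real (walk_count 1 (3*j+1)) * real_of_int (t_num (n - (3*j+1)))"
      unfolding f_def fps_nth_F_fps_minus_X fps_nth_cluster_T_minus_1 by (simp del: walk_count.simps)
  qed
  finally show ?thesis
    by (simp add: J_def)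
qed

lemma cluster_T_minus_1_eq: "cluster_T - 1 = fps_X + (F_fps - fps_X) * (cluster_T - 1)"
proof (rule fps_ext)
  fix n
  show "fps_nth (cluster_T - 1) n = fps_nth (fps_X + (F_fps - fps_X) * (cluster_T - 1)) n"
  proof (cases "n = 0")
    case False
    then have rhs: "fps_nth (fps_X + (F_fps - fps_X) * (cluster_T - 1)) n = (if n = 1 then 1 else 0) +
        (\<Sum>j | 1 \<le> j \<and> 3*j+2 \<le> n. (-1) ^ j * real (walk_count 1 (3*j+1)) * real_of_int (t_num (n - (3*j+1))))"
      using fps_nth_F_fps_minus_X_times_cluster[of n] by (simp add: fps_X_nth)
    show ?thesis
    proof (cases "5 \<le> n")
      case True
      have "real_of_int (t_num n) = (\<Sum>j | 1 \<le> j \<and> 3*j+2 \<le> n.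
          (-1) ^ j * real (walk_count 1 (3*j+1)) * real_of_int (t_num (n - (3*j+1))))"
        using t_num_rec[OF True] by (simp del: walk_count.simps)
      then show ?thesis
        unfolding rhs fps_nth_cluster_T_minus_1 using True by simp
    next
      case False
      then have empty: "{j. 1 \<le> j \<and> 3*j+2 \<le> n} = {}" and "n = 1 \<or> n = 2 \<or> n = 3 \<or> n = 4"
        using \<open>n \<noteq> 0\<close> by auto
      then show ?thesis
        unfolding rhs empty fps_nth_cluster_T_minus_1 using t_num_small by auto
    qed
  qed (simp add: cluster_T_def)
qed

lemma cluster_T_times_denominator: "cluster_T * (1 + fps_X - F_fps) = 1 + 2 * fps_X - F_fps"
proof -
  have "(cluster_T - 1) * (1 + fps_X - F_fps) = fps_X"
    using cluster_T_minus_1_eq by (simp add: algebra_simps)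
  then show ?thesis
    by (simp add: algebra_simps)
qed

lemma cluster_T_eq_quotient: "cluster_T = (1 + 2 * fps_X - F_fps) / (1 + fps_X - F_fps)"
proof -
  have "(1 + fps_X - F_fps :: real fps) \<noteq> 0"
  proof
    assume "1 + fps_X - F_fps = 0"
    then have "fps_nth (1 + fps_X - F_fps) 0 = 0"
      by simp
    then show False
      using F_fps_initial_coeffs(1) by simp
  qed
  then show ?thesis
    using fps_divide_times_eq cluster_T_times_denominator by metis
qed

text \<open>Obtained by eliminating \<open>F\<close> from \<open>(T - 1) (1 + x - F) = x\<close> and \<open>F + x F\<^sup>3 = x\<close>.\<close>

definition cluster_cubic :: "int poly poly" where
  "cluster_cubic = [:[:-1, -2, -6, -12, -8:], [:3, 5, 15, 24, 12:], [:-3, -4, -12, -15, -6:], [:1, 1, 3, 3, 1:]:]"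

lemma degree_cluster_cubic: "degree cluster_cubic = 3"
  by (simp add: cluster_cubic_def)

lemma cluster_cubic_root:
  "poly (map_poly (\<lambda>q. fps_of_poly (map_poly real_of_int q)) cluster_cubic) cluster_T = 0"
proof -
  define S where "S = cluster_T - 1"
  define x where "x = (fps_X :: real fps)"
  define \<phi> where "\<phi> = (\<lambda>q. fps_of_poly (map_poly real_of_int q) :: real fps)"
  have coeffs: "\<phi> [:-1, -2, -6, -12, -8:] = -1 + x*(-2 + x*(-6 + x*(-12 + x*(-8))))"
    "\<phi> [:3, 5, 15, 24, 12:] = 3 + x*(5 + x*(15 + x*(24 + x*12)))"
    "\<phi> [:-3, -4, -12, -15, -6:] = -3 + x*(-4 + x*(-12 + x*(-15 + x*(-6))))"
    "\<phi> [:1, 1, 3, 3, 1:] = 1 + x*(1 + x*(3 + x*(3 + x)))"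
    by (simp_all add: \<phi>_def x_def fps_of_poly_pCons map_poly_pCons numeral_fps_const
        neg_numeral_fps_const algebra_simps)
  have "map_poly \<phi> cluster_cubic =
      [:\<phi> [:-1, -2, -6, -12, -8:], \<phi> [:3, 5, 15, 24, 12:], \<phi> [:-3, -4, -12, -15, -6:], \<phi> [:1, 1, 3, 3, 1:]:]"
  proof -
    have "\<phi> 0 = 0"
      by (simp add: \<phi>_def)
    then show ?thesis
      unfolding cluster_cubic_def by (simp only: map_poly_pCons[of \<phi>] map_poly_0)
  qed
  then have "poly (map_poly \<phi> cluster_cubic) cluster_T =
      S\<^sup>2 * (S * (1 + x) - x) + x * (S * (1 + x) - x) ^ 3 - x * S ^ 3"
    by (simp add: coeffs S_def algebra_simps power2_eq_square power3_eq_cube)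
  also have "S * (1 + x) - x = S * F_fps"
    using cluster_T_times_denominator by (simp add: S_def x_def algebra_simps)
  also have "S\<^sup>2 * (S * F_fps) + x * (S * F_fps) ^ 3 - x * S ^ 3 = S ^ 3 * (F_fps + x * F_fps ^ 3 - x)"
    by (simp add: algebra_simps power3_eq_cube power2_eq_square)
  also have "\<dots> = 0"
    using F_fps_cubic by (simp add: x_def)
  finally show ?thesis
    by (simp add: \<phi>_def)
qed

theorem theorem3p2:
  shows "(\<exists>F :: real fps.
            fps_nth F 0 = 0 \<and> fps_nth F 1 = 1 \<and> fps_nth F 2 = 0 \<and> fps_nth F 3 = 0 \<and>
            fps_conv_radius F > 0 \<and>
            (\<exists>r>0. \<forall>x::real. 0 < x \<and> x < r \<longrightarrow>
               eval_fps F x = 2 / sqrt (3 * x) * sinh (arsinh (3 * sqrt (3 * x ^ 3) / 2) / 3)) \<and>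
            cluster_T = (1 + 2 * fps_X - F) / (1 + fps_X - F))
       \<and> (\<exists>P :: int poly poly. degree P = 3 \<and>
            poly (map_poly (\<lambda>q. fps_of_poly (map_poly real_of_int q)) P) cluster_T = 0)"
proof (intro conjI exI)
  show "fps_nth F_fps 0 = 0" "fps_nth F_fps 1 = 1" "fps_nth F_fps 2 = 0" "fps_nth F_fps 3 = 0"
    by (fact F_fps_initial_coeffs)+
  show "fps_conv_radius F_fps > 0"
    using F_fps_conv_radius by (rule order.strict_trans2[rotated]) simp
  show "\<forall>x::real. 0 < x \<and> x < 1/4 \<longrightarrow>
      eval_fps F_fps x = 2 / sqrt (3 * x) * sinh (arsinh (3 * sqrt (3 * x ^ 3) / 2) / 3)"
    using eval_F_fps by blast
  show "cluster_T = (1 + 2 * fps_X - F_fps) / (1 + fps_X - F_fps)"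
    by (fact cluster_T_eq_quotient)
  show "degree cluster_cubic = 3"
    by (fact degree_cluster_cubic)
  show "poly (map_poly (\<lambda>q. fps_of_poly (map_poly real_of_int q)) cluster_cubic) cluster_T = 0"
    by (fact cluster_cubic_root)
qed simp

end
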